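(* Let $k,l\in\mathbb N_0^2$ with $k_1\neq l_1$ and $k_2\neq l_2$, and let $\xi_k=a_ke_k+\overline{a_k}e_{-k}+(-1)^{k_2+1}\overline{a_k}e_{\bar k}+(-1)^{k_2+1}a_ke_{-\bar k}$ and $\eta_l=b_le_l+\overline{b_l}e_{-l}+(-1)^{l_2+1}\overline{b_l}e_{\bar l}+(-1)^{l_2+1}b_le_{-\bar l}$ (with $a_k,b_l\in\mathbb C$) be nonzero. Then the sectional curvature of $\mathrm{SDiff}(\mathbb K)$ in the plane spanned by $\xi_k,\eta_l$ is $$C(\xi_k,\eta_l)=-\frac{1}{4S_{\mathbb T}\|k\|^2\|l\|^2}\Big(\frac{(k\times l)^4}{\|k+l\|^2}+\frac{(k\times l)^4}{\|k-l\|^2}+\frac{(k\times\bar l)^4}{\|k+\bar l\|^2}+\frac{(k\times\bar l)^4}{\|k-\bar l\|^2}\Big),$$ and in particular $-\min\{\|k\|^2,\|l\|^2\}/S_{\mathbb T}\le C(\xi_k,\eta_l)<0$.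
   Context: $\mathbb T=\mathbb R^2/(2\pi\mathbb Z)^2$, area $S_{\mathbb T}=4\pi^2$, $I(x_1,x_2)=(2\pi-x_1,\pi+x_2)$, $\mathbb K=\mathbb T/I$. The Lie algebra of $\mathrm{SDiff}(\mathbb K)$ is identified with the real smooth zero-mean functions $f$ on $\mathbb T$ with $f\circ I=-f$, with bracket $\{f,g\}=\partial_{x_2}f\partial_{x_1}g-\partial_{x_1}f\partial_{x_2}g$ and inner product $\langle f,g\rangle=\int_{\mathbb T}\nabla f\cdot\nabla g\,dx_1dx_2$ (right-invariant $L^2$ metric, norms computed on $\mathbb T$). Sectional curvature: $\langle B(u,v),w\rangle=\langle u,\{v,w\}\rangle$, $\nabla_uv=\frac12(\{u,v\}-B(u,v)-B(v,u))$, $R(u,v)w=-\nabla_u\nabla_vw+\nabla_v\nabla_uw+\nabla_{\{u,v\}}w$, $C(u,v)=\langle R(u,v)u,v\rangle/(\langle u,u\rangle\langle v,v\rangle-\langle u,v\rangle^2)$. Notation: $e_k=e^{i(k_1x_1+k_2x_2)}$, $\bar k=(k_1,-k_2)$, $\|k\|^2=k_1^2+k_2^2$, $k\times l=k_1l_2-k_2l_1$. *)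

theory Defs
  imports "HOL-Analysis.Analysis"
begin

text \<open>Real functions on the torus are modelled as (2pi,2pi)-periodic functions on R^2.\<close>
type_synonym fn = "real \<times> real \<Rightarrow> real"

definition pd1 :: "fn \<Rightarrow> fn" where
  "pd1 f = (\<lambda>x. frechet_derivative f (at x) (1, 0))"

definition pd2 :: "fn \<Rightarrow> fn" where
  "pd2 f = (\<lambda>x. frechet_derivative f (at x) (0, 1))"

definition pd :: "bool \<Rightarrow> fn \<Rightarrow> fn" where
  "pd b f = (if b then pd2 f else pd1 f)"

text \<open>C-infinity: every iterated partial derivative (including f itself) is differentiable.\<close>
definition smooth_fn :: "fn \<Rightarrow> bool" where
  "smooth_fn f \<longleftrightarrow> (\<forall>ds::bool list. \<forall>x. foldr pd ds f differentiable (at x))"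

definition torus_box :: "(real \<times> real) set" where
  "torus_box = cbox (0, 0) (2 * pi, 2 * pi)"

definition S_T :: real where "S_T = 4 * pi^2"

text \<open>Lie algebra of SDiff(K): smooth, periodic, zero-mean, I-odd real functions.\<close>
definition lie_alg :: "fn set" where
  "lie_alg = {f. smooth_fn f
     \<and> (\<forall>x1 x2. f (x1 + 2 * pi, x2) = f (x1, x2) \<and> f (x1, x2 + 2 * pi) = f (x1, x2))
     \<and> integral torus_box f = 0
     \<and> (\<forall>x1 x2. f (2 * pi - x1, pi + x2) = - f (x1, x2))}"

definition pbracket :: "fn \<Rightarrow> fn \<Rightarrow> fn" where
  "pbracket f g = (\<lambda>x. pd2 f x * pd1 g x - pd1 f x * pd2 g x)"

definition ip :: "fn \<Rightarrow> fn \<Rightarrow> real" where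
  "ip f g = integral torus_box (\<lambda>x. pd1 f x * pd1 g x + pd2 f x * pd2 g x)"

definition Bop :: "fn \<Rightarrow> fn \<Rightarrow> fn" where
  "Bop u v = (THE b. b \<in> lie_alg \<and> (\<forall>w\<in>lie_alg. ip b w = ip u (pbracket v w)))"

definition conn :: "fn \<Rightarrow> fn \<Rightarrow> fn" where
  "conn u v = (\<lambda>x. (pbracket u v x - Bop u v x - Bop v u x) / 2)"

definition curv :: "fn \<Rightarrow> fn \<Rightarrow> fn \<Rightarrow> fn" where
  "curv u v w = (\<lambda>x. - conn u (conn v w) x + conn v (conn u w) x + conn (pbracket u v) w x)"

definition sec_curv :: "fn \<Rightarrow> fn \<Rightarrow> real" where
  "sec_curv u v = ip (curv u v u) v / (ip u u * ip v v - (ip u v)^2)"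

definition ee :: "int \<Rightarrow> int \<Rightarrow> real \<times> real \<Rightarrow> complex" where
  "ee k1 k2 x = cis (of_int k1 * fst x + of_int k2 * snd x)"

text \<open>xi_k = a e_k + conj a e_{-k} + (-1)^(k2+1) conj a e_{kbar} + (-1)^(k2+1) a e_{-kbar};
  this is real-valued, so we take its real part to obtain a real function.\<close>
definition xi :: "complex \<Rightarrow> nat \<Rightarrow> nat \<Rightarrow> fn" where
  "xi a k1 k2 = (\<lambda>x. Re (a * ee (int k1) (int k2) x + cnj a * ee (- int k1) (- int k2) x
      + (-1) ^ (k2 + 1) * cnj a * ee (int k1) (- int k2) x
      + (-1) ^ (k2 + 1) * a * ee (- int k1) (int k2) x))"

end

(*
  Every field involved is a trigonometric polynomial, encoded by its list of Fourier coefficients.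
  The Poisson bracket, the gradient pairing and the operator B become bilinear products with
  explicit Fourier kernels; for B the kernel is B(e_m, e_n) = (m x n) |m|^2 / |m + n|^2 e_(m+n).
  That this candidate satisfies <B(u,v), w> = <u, {v,w}> for every w follows by integrating by
  parts twice on the torus, and it is the only solution because <g,g> = 0 forces a zero-mean
  periodic g to vanish. Then <R(xi,eta)xi, eta> is a sum over quadruples of frequencies adding up
  to zero; when k1 <> l1 and k2 <> l2 only the quadruples (m, n, -m, -n) survive, each
  contributing -(m x n)^4 / |m - n|^2, and the sixteen pairs (m, n) give the four terms of the
  formula. The lower bound follows from (k x l)^2 <= |k|^2 |k +- l|^2 and its analogue with |l|^2.
*)

theory Submission
  imports Defs
begin

section \<open>Trigonometric polynomials\<close>

type_synonym mode = "int \<times> int"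

definition wave :: "mode \<Rightarrow> real \<times> real \<Rightarrow> complex" where
  "wave m = ee (fst m) (snd m)"

lemma wave_eq: "wave m x = cis (of_int (fst m) * fst x + of_int (snd m) * snd x)"
  by (simp add: wave_def ee_def)

text \<open>A trigonometric polynomial \<open>\<Sum> c e\<^sub>m\<close> is represented by the list of its pairs \<open>(c, m)\<close>;
  frequencies may repeat.\<close>

type_synonym tpoly = "(complex \<times> mode) list"

definition tp_eval :: "tpoly \<Rightarrow> real \<times> real \<Rightarrow> complex" where
  "tp_eval P x = (\<Sum>p\<leftarrow>P. fst p * wave (snd p) x)"

definition tp_fn :: "tpoly \<Rightarrow> fn" where
  "tp_fn P = (\<lambda>x. Re (tp_eval P x))"

definition tp_d1 :: "tpoly \<Rightarrow> tpoly" where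
  "tp_d1 P = map (\<lambda>p. (\<i> * of_int (fst (snd p)) * fst p, snd p)) P"

definition tp_d2 :: "tpoly \<Rightarrow> tpoly" where
  "tp_d2 P = map (\<lambda>p. (\<i> * of_int (snd (snd p)) * fst p, snd p)) P"

lemma tp_eval_Nil [simp]: "tp_eval [] x = 0"
  and tp_eval_Cons [simp]: "tp_eval (p # P) x = fst p * wave (snd p) x + tp_eval P x"
  and tp_eval_append [simp]: "tp_eval (P @ Q) x = tp_eval P x + tp_eval Q x"
  by (simp_all add: tp_eval_def)

lemma tp_d1_Nil [simp]: "tp_d1 [] = []"
  and tp_d1_Cons [simp]: "tp_d1 (p # P) = (\<i> * of_int (fst (snd p)) * fst p, snd p) # tp_d1 P"
  by (simp_all add: tp_d1_def)

lemma tp_d2_Nil [simp]: "tp_d2 [] = []"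
  and tp_d2_Cons [simp]: "tp_d2 (p # P) = (\<i> * of_int (snd (snd p)) * fst p, snd p) # tp_d2 P"
  by (simp_all add: tp_d2_def)

lemma tp_fn_append: "tp_fn (P @ Q) x = tp_fn P x + tp_fn Q x"
  by (simp add: tp_fn_def)

lemma tp_d1_d2_commute: "tp_d1 (tp_d2 P) = tp_d2 (tp_d1 P)"
  by (induction P) (auto simp: algebra_simps)

lemma has_derivative_wave:
  "(wave m has_derivative
     (\<lambda>h. of_real (fst h) * (\<i> * of_int (fst m) * wave m x)
        + of_real (snd h) * (\<i> * of_int (snd m) * wave m x))) (at x)"
proof -
  have "((\<lambda>x::real \<times> real. of_int (fst m) * fst x + of_int (snd m) * snd x) has_derivative
      (\<lambda>h. of_int (fst m) * fst h + of_int (snd m) * snd h)) (at x)"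
    by (auto intro!: derivative_eq_intros)
  from has_derivative_cis[OF this] show ?thesis
    unfolding wave_eq[abs_def]
    by (rule has_derivative_eq_rhs) (auto simp: fun_eq_iff scaleR_conv_of_real algebra_simps)
qed

lemma has_derivative_tp_eval:
  "(tp_eval P has_derivative
     (\<lambda>h. of_real (fst h) * tp_eval (tp_d1 P) x + of_real (snd h) * tp_eval (tp_d2 P) x)) (at x)"
proof (induction P)
  case Nil
  then show ?case by (simp add: tp_eval_def)
next
  case (Cons p P)
  have "tp_eval (p # P) = (\<lambda>x. fst p * wave (snd p) x + tp_eval P x)"
    by (rule ext) simp
  moreover have "((\<lambda>x. fst p * wave (snd p) x + tp_eval P x) has_derivative
     (\<lambda>h. fst p * (of_real (fst h) * (\<i> * of_int (fst (snd p)) * wave (snd p) x)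
                  + of_real (snd h) * (\<i> * of_int (snd (snd p)) * wave (snd p) x))
        + (of_real (fst h) * tp_eval (tp_d1 P) x + of_real (snd h) * tp_eval (tp_d2 P) x))) (at x)"
    by (intro has_derivative_add has_derivative_mult_right has_derivative_wave Cons)
  ultimately show ?case
    by (auto elim!: has_derivative_eq_rhs simp: fun_eq_iff algebra_simps)
qed

lemma has_derivative_tp_fn:
  "(tp_fn P has_derivative (\<lambda>h. fst h * tp_fn (tp_d1 P) x + snd h * tp_fn (tp_d2 P) x)) (at x)"
  using bounded_linear.has_derivative[OF bounded_linear_Re has_derivative_tp_eval]
  unfolding tp_fn_def by (rule has_derivative_eq_rhs) (auto simp: fun_eq_iff)

lemma tp_fn_differentiable [simp]: "tp_fn P differentiable (at x)"
  using has_derivative_tp_fn unfolding differentiable_def by blast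

lemma pd1_tp_fn [simp]: "pd1 (tp_fn P) = tp_fn (tp_d1 P)"
  and pd2_tp_fn [simp]: "pd2 (tp_fn P) = tp_fn (tp_d2 P)"
  unfolding pd1_def pd2_def
  using frechet_derivative_at[OF has_derivative_tp_fn, symmetric] by (auto simp: fun_eq_iff)

lemma pd_simps [simp]: "pd False f = pd1 f" "pd True f = pd2 f"
  by (simp_all add: pd_def)

lemma smooth_fn_tp_fn: "smooth_fn (tp_fn P)"
proof -
  have "\<exists>Q. foldr pd ds (tp_fn P) = tp_fn Q" for ds
    by (induction ds) (auto simp del: pd_simps simp: pd_def)
  then show ?thesis
    unfolding smooth_fn_def by (metis tp_fn_differentiable)
qed

lemma continuous_on_tp_eval: "continuous_on S (tp_eval P)"
  by (induction P) (auto simp: tp_eval_def wave_eq intro!: continuous_intros)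

lemma continuous_on_tp_fn: "continuous_on S (tp_fn P)"
  unfolding tp_fn_def by (intro continuous_intros continuous_on_tp_eval)

lemma cis_add_int_2pi: "cis (a + of_int n * (2 * pi)) = cis a"
proof -
  have "cos (of_int n * (2 * pi)) = 1" "sin (of_int n * (2 * pi)) = 0"
    using cos_int_2pin[of n] sin_int_2pin[of n] by (simp_all add: mult.commute)
  then show ?thesis by (simp add: cis.ctr cos_add sin_add complex_eq_iff)
qed

lemma wave_periodic:
  "wave m (x1 + 2 * pi, x2) = wave m (x1, x2)"
  "wave m (x1, x2 + 2 * pi) = wave m (x1, x2)"
proof -
  have "of_int (fst m) * (x1 + 2 * pi) + of_int (snd m) * x2
      = (of_int (fst m) * x1 + of_int (snd m) * x2) + of_int (fst m) * (2 * pi)"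
    "of_int (fst m) * x1 + of_int (snd m) * (x2 + 2 * pi)
      = (of_int (fst m) * x1 + of_int (snd m) * x2) + of_int (snd m) * (2 * pi)"
    by (simp_all add: algebra_simps)
  then show "wave m (x1 + 2 * pi, x2) = wave m (x1, x2)" "wave m (x1, x2 + 2 * pi) = wave m (x1, x2)"
    unfolding wave_eq by (simp_all only: fst_conv snd_conv cis_add_int_2pi)
qed

lemma tp_fn_periodic:
  "tp_fn P (x1 + 2 * pi, x2) = tp_fn P (x1, x2)"
  "tp_fn P (x1, x2 + 2 * pi) = tp_fn P (x1, x2)"
proof -
  have "tp_eval P (x1 + 2 * pi, x2) = tp_eval P (x1, x2)"
    "tp_eval P (x1, x2 + 2 * pi) = tp_eval P (x1, x2)"
    by (induction P) (auto simp: wave_periodic)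
  then show "tp_fn P (x1 + 2 * pi, x2) = tp_fn P (x1, x2)" "tp_fn P (x1, x2 + 2 * pi) = tp_fn P (x1, x2)"
    by (simp_all add: tp_fn_def)
qed

lemma has_integral_cis_int:
  "((\<lambda>t. cis (of_int n * t)) has_integral (if n = 0 then 2 * pi else 0)) {0..2 * pi}"
proof (cases "n = 0")
  case True
  then show ?thesis
    using has_integral_const_real[of "1::complex" 0 "2 * pi"] by (simp add: scaleR_conv_of_real)
next
  case False
  let ?F = "\<lambda>t. cis (of_int n * t) / (\<i> * of_int n)"
  have "((\<lambda>t. cis (of_int n * t)) has_integral (?F (2 * pi) - ?F 0)) {0..2 * pi}"
  proof (rule fundamental_theorem_of_calculus)
    fix t :: real
    have "((\<lambda>t. cis (of_int n * t)) has_derivative (\<lambda>h. (of_int n * h) *\<^sub>R (\<i> * cis (of_int n * t))))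
        (at t within {0..2 * pi})"
      by (intro has_derivative_cis derivative_intros)
    then have "((\<lambda>t. cis (of_int n * t)) has_vector_derivative (of_int n * (\<i> * cis (of_int n * t))))
        (at t within {0..2 * pi})"
      unfolding has_vector_derivative_def
      by (rule has_derivative_eq_rhs) (auto simp: fun_eq_iff scaleR_conv_of_real)
    then have "(?F has_vector_derivative (of_int n * (\<i> * cis (of_int n * t))) / (\<i> * of_int n))
        (at t within {0..2 * pi})"
      by (rule has_vector_derivative_divide)
    then show "(?F has_vector_derivative cis (of_int n * t)) (at t within {0..2 * pi})"
      using False by (simp add: field_simps)
  qed simp
  moreover have "?F (2 * pi) - ?F 0 = 0"
    using cis_add_int_2pi[of 0 n] by (simp add: mult.commute)
  ultimately show ?thesis using False by simp
qed

lemma has_integral_wave: "(wave m has_integral (if m = 0 then of_real S_T else 0)) torus_box"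
proof -
  have cont: "continuous_on (cbox (0, 0) (2 * pi, 2 * pi)) (wave m)"
    unfolding wave_eq[abs_def] by (intro continuous_intros)
  have int1: "integral {0..2 * pi} (\<lambda>t. cis (of_int n * t)) = (if n = 0 then 2 * pi else 0)" for n
    using has_integral_cis_int by (rule integral_unique)
  have "integral (cbox (0, 0) (2 * pi, 2 * pi)) (wave m)
      = integral (cbox 0 (2 * pi)) (\<lambda>x. integral (cbox 0 (2 * pi)) (\<lambda>y. wave m (x, y)))"
    by (rule integral_prod_continuous[OF cont])
  also have "\<dots> = integral {0..2 * pi} (\<lambda>x. cis (of_int (fst m) * x)
      * integral {0..2 * pi} (\<lambda>y. cis (of_int (snd m) * y)))"
    by (simp add: wave_eq cis_mult[symmetric])
  also have "\<dots> = integral {0..2 * pi} (\<lambda>x. cis (of_int (fst m) * x))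
      * integral {0..2 * pi} (\<lambda>y. cis (of_int (snd m) * y))"
    by (rule integral_mult_left)
  also have "\<dots> = (if m = 0 then of_real S_T else 0)"
    by (cases m) (auto simp: int1 S_T_def power2_eq_square zero_prod_def)
  finally show ?thesis
    using integrable_integral[OF integrable_continuous[OF cont]] unfolding torus_box_def by simp
qed

definition tp_coeff :: "tpoly \<Rightarrow> mode \<Rightarrow> complex" where
  "tp_coeff P m = (\<Sum>q\<leftarrow>P. if snd q = m then fst q else 0)"

lemma tp_coeff_Nil [simp]: "tp_coeff [] m = 0"
  and tp_coeff_Cons [simp]: "tp_coeff (q # P) m = (if snd q = m then fst q else 0) + tp_coeff P m"
  and tp_coeff_append [simp]: "tp_coeff (P @ Q) m = tp_coeff P m + tp_coeff Q m"
  by (simp_all add: tp_coeff_def)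

lemma has_integral_tp_eval: "(tp_eval P has_integral (of_real S_T * tp_coeff P 0)) torus_box"
proof (induction P)
  case Nil
  then show ?case by (simp add: tp_eval_def)
next
  case (Cons q P)
  have "tp_eval (q # P) = (\<lambda>x. fst q * wave (snd q) x + tp_eval P x)"
    by (rule ext) simp
  moreover have "((\<lambda>x. fst q * wave (snd q) x + tp_eval P x) has_integral
     (fst q * (if snd q = 0 then of_real S_T else 0) + of_real S_T * tp_coeff P 0)) torus_box"
    by (intro has_integral_add has_integral_mult_right has_integral_wave Cons)
  ultimately show ?case by (auto simp: algebra_simps)
qed

lemma has_integral_tp_fn: "(tp_fn P has_integral (S_T * Re (tp_coeff P 0))) torus_box"
  using has_integral_linear[OF has_integral_tp_eval bounded_linear_Re]
  by (simp add: tp_fn_def o_def)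

definition mode_refl :: "mode \<Rightarrow> mode" where
  "mode_refl m = (- fst m, snd m)"

definition mode_sign :: "mode \<Rightarrow> complex" where
  "mode_sign m = (if even (snd m) then 1 else -1)"

lemma mode_refl_simps [simp]:
  "fst (mode_refl m) = - fst m" "snd (mode_refl m) = snd m" "mode_refl (mode_refl m) = m"
  by (simp_all add: mode_refl_def)

lemma mode_refl_add: "mode_refl (m + n) = mode_refl m + mode_refl n"
  and mode_refl_uminus [simp]: "mode_refl (- m) = - mode_refl m"
  and mode_refl_eq_iff: "mode_refl m = n \<longleftrightarrow> m = mode_refl n"
  by (auto simp: mode_refl_def)

lemma mode_sign_refl [simp]: "mode_sign (mode_refl m) = mode_sign m"
  and mode_sign_add: "mode_sign (m + n) = mode_sign m * mode_sign n"
  by (auto simp: mode_sign_def)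

lemma wave_add: "wave (m + n) x = wave m x * wave n x"
  by (simp add: wave_eq cis_mult algebra_simps)

lemma wave_uminus: "wave (- m) x = cnj (wave m x)"
proof -
  have "cnj (cis t) = cis (- t)" for t
    by (simp add: complex_eq_iff)
  then show ?thesis
    by (simp add: wave_eq algebra_simps)
qed

lemma cis_int_pi: "cis (of_int j * pi) = (if even j then 1 else -1)"
proof (cases "even j")
  case True
  then obtain i where "j = 2 * i" by (metis evenE)
  then have "cis (of_int j * pi) = cis (0 + of_int i * (2 * pi))" by (simp add: algebra_simps)
  then show ?thesis using True by (simp only: cis_add_int_2pi) simp
next
  case False
  then obtain i where "j = 2 * i + 1" by (metis oddE)
  then have "cis (of_int j * pi) = cis (pi + of_int i * (2 * pi))" by (simp add: algebra_simps)
  then show ?thesis using False by (simp only: cis_add_int_2pi) (simp add: complex_eq_iff)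
qed

lemma wave_involution: "wave m (2 * pi - x1, pi + x2) = mode_sign m * wave (mode_refl m) (x1, x2)"
proof -
  have "wave m (2 * pi - x1, pi + x2)
      = cis ((- of_int (fst m) * x1 + of_int (snd m) * x2) + of_int (fst m) * (2 * pi))
        * cis (of_int (snd m) * pi)"
    by (simp add: wave_eq cis_mult algebra_simps)
  then show ?thesis
    by (simp only: cis_add_int_2pi cis_int_pi) (simp add: wave_eq mode_sign_def)
qed

lemma sum_list_eq_sum_tp_coeff:
  assumes "finite F" "snd ` set P \<subseteq> F"
  shows "(\<Sum>q\<leftarrow>P. fst q * g (snd q)) = (\<Sum>m\<in>F. tp_coeff P m * g m)"
  using assms(2)
proof (induction P)
  case Nil
  then show ?case by simp
next
  case (Cons q P)
  have "(\<Sum>m\<in>F. (if snd q = m then fst q else 0) * g m) = (\<Sum>m\<in>F. if snd q = m then fst q * g (snd q) else 0)"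
    by (rule sum.cong) auto
  also have "\<dots> = fst q * g (snd q)"
    using Cons.prems assms(1) by (simp add: sum.delta)
  finally show ?case
    using Cons by (simp add: algebra_simps sum.distrib)
qed

lemma tp_eval_eq_sum_tp_coeff:
  assumes "finite F" "snd ` set P \<subseteq> F"
  shows "tp_eval P x = (\<Sum>m\<in>F. tp_coeff P m * wave m x)"
  unfolding tp_eval_def using sum_list_eq_sum_tp_coeff[OF assms, of "\<lambda>m. wave m x"] by simp

text \<open>Multiplying by \<open>e\<^sub>-\<^sub>m\<close> moves the coefficient at \<open>m\<close> to frequency \<open>0\<close>, where the integral reads it off.\<close>

lemma has_integral_tp_eval_wave:
  "((\<lambda>x. tp_eval P x * wave (- m) x) has_integral (of_real S_T * tp_coeff P m)) torus_box"
proof -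
  define Q where "Q = map (\<lambda>q. (fst q, snd q - m)) P"
  have "tp_eval Q = (\<lambda>x. tp_eval P x * wave (- m) x)"
  proof
    fix x
    have "wave (n - m) x = wave n x * wave (- m) x" for n
      using wave_add[of n "- m"] by simp
    then show "tp_eval Q x = tp_eval P x * wave (- m) x"
      unfolding Q_def by (induction P) (simp_all add: distrib_right)
  qed
  moreover have "tp_coeff Q 0 = tp_coeff P m"
    unfolding Q_def by (induction P) auto
  ultimately show ?thesis
    using has_integral_tp_eval[of Q] by simp
qed

lemma tp_coeff_unique:
  assumes "\<And>x. tp_eval P x = tp_eval Q x"
  shows "tp_coeff P = tp_coeff Q"
proof
  fix m
  have "(\<lambda>x. tp_eval P x * wave (- m) x) = (\<lambda>x. tp_eval Q x * wave (- m) x)"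
    using assms by simp
  then have "of_real S_T * tp_coeff P m = of_real S_T * tp_coeff Q m"
    using has_integral_tp_eval_wave[of P m] has_integral_tp_eval_wave[of Q m]
    by (metis has_integral_unique)
  then show "tp_coeff P m = tp_coeff Q m"
    by (simp add: S_T_def)
qed

section \<open>Products with a kernel\<close>

text \<open>\<open>tp_prod \<phi> P Q\<close> is the bilinear product \<open>\<Sum>\<^sub>m\<^sub>,\<^sub>n p\<^sub>m q\<^sub>n \<phi>(m, n) e\<^sub>m\<^sub>+\<^sub>n\<close>; the Poisson bracket, the gradient
  product and the operator \<open>B\<close> are all of this form.\<close>

definition tp_prod :: "(mode \<Rightarrow> mode \<Rightarrow> real) \<Rightarrow> tpoly \<Rightarrow> tpoly \<Rightarrow> tpoly" where
  "tp_prod \<phi> P Q =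
     concat (map (\<lambda>p. map (\<lambda>q. (fst p * fst q * of_real (\<phi> (snd p) (snd q)), snd p + snd q)) Q) P)"

lemma tp_eval_tp_prod:
  "tp_eval (tp_prod \<phi> P Q) x =
     (\<Sum>p\<leftarrow>P. \<Sum>q\<leftarrow>Q. fst p * fst q * of_real (\<phi> (snd p) (snd q)) * wave (snd p + snd q) x)"
proof -
  have "tp_eval (concat Ps) x = (\<Sum>P\<leftarrow>Ps. tp_eval P x)" for Ps
    by (induction Ps) auto
  then show ?thesis
    unfolding tp_prod_def by (simp add: o_def tp_eval_def)
qed

lemma tp_coeff_tp_prod:
  "tp_coeff (tp_prod \<phi> P Q) m =
     (\<Sum>p\<leftarrow>P. \<Sum>q\<leftarrow>Q. if snd p + snd q = m then fst p * fst q * of_real (\<phi> (snd p) (snd q)) else 0)"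
proof -
  have "tp_coeff (concat Ps) m = (\<Sum>P\<leftarrow>Ps. tp_coeff P m)" for Ps
    by (induction Ps) auto
  then show ?thesis
    unfolding tp_prod_def by (simp add: o_def tp_coeff_def cong: if_cong)
qed

lemma sum_list_tp_prod:
  "(\<Sum>q\<leftarrow>tp_prod \<phi> P Q. f q) =
     (\<Sum>p\<leftarrow>P. \<Sum>q\<leftarrow>Q. (f (fst p * fst q * of_real (\<phi> (snd p) (snd q)), snd p + snd q) :: complex))"
  by (induction P) (auto simp: tp_prod_def o_def)

lemma tp_prod_append_left: "tp_prod \<phi> (P @ Q) R = tp_prod \<phi> P R @ tp_prod \<phi> Q R"
  by (simp add: tp_prod_def)

lemma sum_list_swap:
  "(\<Sum>p\<leftarrow>P. \<Sum>q\<leftarrow>Q. f p q) = (\<Sum>q\<leftarrow>Q. \<Sum>p\<leftarrow>P. (f p q :: 'a::comm_monoid_add))"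
  by (induction P) (auto simp: sum_list_addf)

lemma tp_eval_tp_prod_swap:
  "tp_eval (tp_prod \<phi> Q P) x = tp_eval (tp_prod (\<lambda>m n. \<phi> n m) P Q) x"
  unfolding tp_eval_tp_prod by (subst sum_list_swap) (simp add: add.commute algebra_simps)

text \<open>A finite index set for the coefficients of \<open>P\<close> that both symmetries \<open>m \<mapsto> -m\<close> and \<open>mode_refl\<close> permute.\<close>

definition mode_orbit :: "tpoly \<Rightarrow> mode set" where
  "mode_orbit P = (let M = snd ` set P in M \<union> uminus ` M \<union> mode_refl ` M \<union> (uminus \<circ> mode_refl) ` M)"

lemma finite_mode_orbit [simp]: "finite (mode_orbit P)"
  by (simp add: mode_orbit_def Let_def)

lemma mode_orbit_supset: "snd ` set P \<subseteq> mode_orbit P"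
  by (auto simp: mode_orbit_def)

lemma mem_mode_orbit_iff:
  "m \<in> mode_orbit P \<longleftrightarrow>
     (\<exists>q\<in>set P. m = snd q \<or> m = - snd q \<or> m = mode_refl (snd q) \<or> m = - mode_refl (snd q))"
  unfolding mode_orbit_def Let_def by (simp add: image_iff) blast

lemma mode_orbit_closed:
  assumes "m \<in> mode_orbit P"
  shows "- m \<in> mode_orbit P" "mode_refl m \<in> mode_orbit P"
  using assms unfolding mem_mode_orbit_iff
  by (metis minus_minus mode_refl_uminus mode_refl_simps(3))+

lemma sum_mode_orbit_reindex:
  "(\<Sum>m\<in>mode_orbit P. f (- m)) = (\<Sum>m\<in>mode_orbit P. f m)"
  "(\<Sum>m\<in>mode_orbit P. f (mode_refl m)) = (\<Sum>m\<in>mode_orbit P. f m)"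
proof -
  have "bij_betw uminus (mode_orbit P) (mode_orbit P)"
    by (rule bij_betw_byWitness[where f'=uminus]) (simp_all add: image_subset_iff mode_orbit_closed)
  from sum.reindex_bij_betw[OF this, of f]
  show "(\<Sum>m\<in>mode_orbit P. f (- m)) = (\<Sum>m\<in>mode_orbit P. f m)" by simp
  have "bij_betw mode_refl (mode_orbit P) (mode_orbit P)"
    by (rule bij_betw_byWitness[where f'=mode_refl]) (simp_all add: image_subset_iff mode_orbit_closed)
  from sum.reindex_bij_betw[OF this, of f]
  show "(\<Sum>m\<in>mode_orbit P. f (mode_refl m)) = (\<Sum>m\<in>mode_orbit P. f m)" by simp
qed

lemma sum_mode_orbit_reindex2:
  "(\<Sum>m\<in>mode_orbit P. \<Sum>n\<in>mode_orbit Q. f (- m) (- n)) = (\<Sum>m\<in>mode_orbit P. \<Sum>n\<in>mode_orbit Q. f m n)"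
  "(\<Sum>m\<in>mode_orbit P. \<Sum>n\<in>mode_orbit Q. f (mode_refl m) (mode_refl n))
     = (\<Sum>m\<in>mode_orbit P. \<Sum>n\<in>mode_orbit Q. f m n)"
  by (simp_all only: sum_mode_orbit_reindex(1)[where f="\<lambda>m. \<Sum>n\<in>mode_orbit Q. f m n"]
      sum_mode_orbit_reindex(2)[where f="\<lambda>m. \<Sum>n\<in>mode_orbit Q. f m n"] sum_mode_orbit_reindex)

lemma tp_eval_tp_prod_orbit:
  "tp_eval (tp_prod \<phi> P Q) x =
     (\<Sum>m\<in>mode_orbit P. \<Sum>n\<in>mode_orbit Q. tp_coeff P m * tp_coeff Q n * of_real (\<phi> m n) * wave (m + n) x)"
proof -
  have "tp_eval (tp_prod \<phi> P Q) x
      = (\<Sum>p\<leftarrow>P. fst p * (\<Sum>q\<leftarrow>Q. fst q * (of_real (\<phi> (snd p) (snd q)) * wave (snd p + snd q) x)))"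
    unfolding tp_eval_tp_prod by (simp add: sum_list_const_mult algebra_simps)
  also have "\<dots> = (\<Sum>p\<leftarrow>P. fst p * (\<Sum>n\<in>mode_orbit Q. tp_coeff Q n * (of_real (\<phi> (snd p) n) * wave (snd p + n) x)))"
  proof (rule arg_cong[where f=sum_list], rule map_cong[OF refl])
    fix p
    show "fst p * (\<Sum>q\<leftarrow>Q. fst q * (of_real (\<phi> (snd p) (snd q)) * wave (snd p + snd q) x))
        = fst p * (\<Sum>n\<in>mode_orbit Q. tp_coeff Q n * (of_real (\<phi> (snd p) n) * wave (snd p + n) x))"
      using sum_list_eq_sum_tp_coeff[OF finite_mode_orbit mode_orbit_supset,
          where P=Q and g="\<lambda>n. of_real (\<phi> (snd p) n) * wave (snd p + n) x"] by simp
  qed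
  also have "\<dots> = (\<Sum>m\<in>mode_orbit P. tp_coeff P m * (\<Sum>n\<in>mode_orbit Q. tp_coeff Q n * (of_real (\<phi> m n) * wave (m + n) x)))"
    by (rule sum_list_eq_sum_tp_coeff[OF finite_mode_orbit mode_orbit_supset])
  finally show ?thesis
    by (simp add: sum_distrib_left algebra_simps)
qed

definition real_tp :: "tpoly \<Rightarrow> bool" where
  "real_tp P \<longleftrightarrow> (\<forall>x. Im (tp_eval P x) = 0)"

definition odd_tp :: "tpoly \<Rightarrow> bool" where
  "odd_tp P \<longleftrightarrow> (\<forall>x1 x2. tp_eval P (2 * pi - x1, pi + x2) = - tp_eval P (x1, x2))"

definition lie_tp :: "tpoly \<Rightarrow> bool" where
  "lie_tp P \<longleftrightarrow> real_tp P \<and> odd_tp P"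

lemma real_tpD: "real_tp P \<Longrightarrow> Im (tp_eval P x) = 0"
  unfolding real_tp_def by blast

lemma real_tp_append: "real_tp P \<Longrightarrow> real_tp Q \<Longrightarrow> real_tp (P @ Q)"
  by (simp add: real_tp_def)

lemma tp_coeff_uminus_if_real:
  assumes "real_tp P"
  shows "tp_coeff P (- m) = cnj (tp_coeff P m)"
proof -
  define Q where "Q = map (\<lambda>q. (cnj (fst q), - snd q)) P"
  have "tp_eval Q x = cnj (tp_eval P x)" for x
    unfolding Q_def by (induction P) (auto simp: wave_uminus)
  then have "tp_eval Q x = tp_eval P x" for x
    using real_tpD[OF assms] by (simp add: complex_eq_iff)
  then have "tp_coeff Q = tp_coeff P"
    by (rule tp_coeff_unique)
  moreover have "tp_coeff Q m = cnj (tp_coeff P (- m))"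
    unfolding Q_def by (induction P) (auto simp: minus_equation_iff[of m])
  ultimately show ?thesis
    by (metis complex_cnj_cnj)
qed

lemma tp_coeff_refl_if_odd:
  assumes "odd_tp P"
  shows "mode_sign m * tp_coeff P (mode_refl m) = - tp_coeff P m"
proof -
  define Q where "Q = map (\<lambda>q. (mode_sign (snd q) * fst q, mode_refl (snd q))) P"
  define R where "R = map (\<lambda>q. (- fst q, snd q)) P"
  have "tp_eval Q (x1, x2) = tp_eval P (2 * pi - x1, pi + x2)" for x1 x2
    unfolding Q_def by (induction P) (auto simp: wave_involution)
  moreover have "tp_eval R x = - tp_eval P x" for x
    unfolding R_def by (induction P) auto
  ultimately have "tp_eval Q x = tp_eval R x" for x
    using assms by (cases x) (simp add: odd_tp_def)
  then have "tp_coeff Q = tp_coeff R"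
    by (rule tp_coeff_unique)
  moreover have "tp_coeff Q m = mode_sign m * tp_coeff P (mode_refl m)"
    unfolding Q_def by (induction P) (auto simp: mode_refl_eq_iff algebra_simps)
  moreover have "tp_coeff R m = - tp_coeff P m"
    unfolding R_def by (induction P) auto
  ultimately show ?thesis
    by metis
qed

lemma real_tp_tp_prod:
  assumes P: "real_tp P" and Q: "real_tp Q" and \<phi>: "\<And>m n. \<phi> (- m) (- n) = \<phi> m n"
  shows "real_tp (tp_prod \<phi> P Q)"
  unfolding real_tp_def
proof
  fix x
  let ?f = "\<lambda>m n. tp_coeff P m * tp_coeff Q n * of_real (\<phi> m n) * wave (m + n) x"
  have "wave (- m - n) x = cnj (wave (m + n) x)" for m n
    using wave_uminus[of "m + n"] by simp
  then have "cnj (tp_eval (tp_prod \<phi> P Q) x) = (\<Sum>m\<in>mode_orbit P. \<Sum>n\<in>mode_orbit Q. ?f (- m) (- n))"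
    unfolding tp_eval_tp_prod_orbit
    by (simp add: tp_coeff_uminus_if_real[OF P] tp_coeff_uminus_if_real[OF Q] \<phi> wave_uminus)
  also have "\<dots> = tp_eval (tp_prod \<phi> P Q) x"
    unfolding tp_eval_tp_prod_orbit by (rule sum_mode_orbit_reindex2(1))
  finally show "Im (tp_eval (tp_prod \<phi> P Q) x) = 0"
    by (metis cnj.simps(2) neg_equal_zero)
qed

lemma odd_tp_tp_prod:
  assumes P: "odd_tp P" and Q: "odd_tp Q" and \<phi>: "\<And>m n. \<phi> (mode_refl m) (mode_refl n) = - \<phi> m n"
  shows "odd_tp (tp_prod \<phi> P Q)"
  unfolding odd_tp_def
proof (intro allI)
  fix x1 x2
  let ?f = "\<lambda>m n. tp_coeff P m * tp_coeff Q n * of_real (\<phi> m n) * (mode_sign m * mode_sign n)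
    * wave (mode_refl (m + n)) (x1, x2)"
  have "tp_eval (tp_prod \<phi> P Q) (2 * pi - x1, pi + x2)
      = (\<Sum>m\<in>mode_orbit P. \<Sum>n\<in>mode_orbit Q. ?f m n)"
    unfolding tp_eval_tp_prod_orbit wave_involution by (simp add: mode_sign_add algebra_simps)
  also have "\<dots> = (\<Sum>m\<in>mode_orbit P. \<Sum>n\<in>mode_orbit Q. ?f (mode_refl m) (mode_refl n))"
    by (rule sum_mode_orbit_reindex2(2)[symmetric])
  also have "\<dots> = (\<Sum>m\<in>mode_orbit P. \<Sum>n\<in>mode_orbit Q.
      (mode_sign m * tp_coeff P (mode_refl m)) * (mode_sign n * tp_coeff Q (mode_refl n))
      * of_real (\<phi> (mode_refl m) (mode_refl n)) * wave (m + n) (x1, x2))"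
    by (simp add: mode_refl_add algebra_simps)
  also have "\<dots> = - tp_eval (tp_prod \<phi> P Q) (x1, x2)"
    unfolding tp_eval_tp_prod_orbit tp_coeff_refl_if_odd[OF P] tp_coeff_refl_if_odd[OF Q] \<phi>
    by (simp add: sum_negf[symmetric])
  finally show "tp_eval (tp_prod \<phi> P Q) (2 * pi - x1, pi + x2) = - tp_eval (tp_prod \<phi> P Q) (x1, x2)" .
qed

lemma lie_tp_tp_prod:
  "lie_tp P \<Longrightarrow> lie_tp Q \<Longrightarrow> (\<And>m n. \<phi> (- m) (- n) = \<phi> m n) \<Longrightarrow>
    (\<And>m n. \<phi> (mode_refl m) (mode_refl n) = - \<phi> m n) \<Longrightarrow> lie_tp (tp_prod \<phi> P Q)"
  unfolding lie_tp_def using real_tp_tp_prod odd_tp_tp_prod by blast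

definition cross :: "mode \<Rightarrow> mode \<Rightarrow> real" where
  "cross m n = of_int (fst m * snd n - snd m * fst n)"

definition norm2 :: "mode \<Rightarrow> real" where
  "norm2 m = of_int (fst m * fst m + snd m * snd m)"

definition dot :: "mode \<Rightarrow> mode \<Rightarrow> real" where
  "dot m n = of_int (fst m * fst n + snd m * snd n)"

text \<open>\<open>\<nabla>e\<^sub>m \<cdot> \<nabla>e\<^sub>n = (\<i>m)\<cdot>(\<i>n) e\<^sub>m\<^sub>+\<^sub>n\<close>, whence the sign.\<close>

definition grad_kernel :: "mode \<Rightarrow> mode \<Rightarrow> real" where
  "grad_kernel m n = - dot m n"

lemma cross_commute: "cross n m = - cross m n"
  by (simp add: cross_def)

lemma cross_symmetries [simp]:
  "cross (- m) (- n) = cross m n" "cross (mode_refl m) (mode_refl n) = - cross m n"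
  by (simp_all add: cross_def)

lemma cross_eq_0_if_add_eq_0: "m + n = 0 \<Longrightarrow> cross m n = 0"
  by (cases m; cases n) (simp add: cross_def zero_prod_def add_eq_0_iff)

lemma norm2_symmetries [simp]: "norm2 (- m) = norm2 m" "norm2 (mode_refl m) = norm2 m"
  by (simp_all add: norm2_def)

lemma norm2_eq_0_iff: "norm2 m = 0 \<longleftrightarrow> m = 0"
proof -
  have "fst m * fst m + snd m * snd m = 0 \<longleftrightarrow> fst m = 0 \<and> snd m = 0"
    by (rule sum_squares_eq_zero_iff)
  then show ?thesis by (cases m) (simp add: norm2_def zero_prod_def)
qed

lemma real_tp_d1_d2:
  assumes "real_tp P"
  shows "real_tp (tp_d1 P)" "real_tp (tp_d2 P)"
proof -
  have "Im (tp_eval (tp_d1 P) x) = 0 \<and> Im (tp_eval (tp_d2 P) x) = 0" for x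
  proof -
    have D: "((\<lambda>x. Im (tp_eval P x)) has_derivative
        (\<lambda>h. Im (of_real (fst h) * tp_eval (tp_d1 P) x + of_real (snd h) * tp_eval (tp_d2 P) x))) (at x)"
      by (rule bounded_linear.has_derivative[OF bounded_linear_Im has_derivative_tp_eval])
    have "(\<lambda>x. Im (tp_eval P x)) = (\<lambda>x. 0)"
      using real_tpD[OF assms] by blast
    then have "((\<lambda>x. Im (tp_eval P x)) has_derivative (\<lambda>h. 0)) (at x)"
      by simp
    from has_derivative_unique[OF D this]
    have "(\<lambda>h. Im (of_real (fst h) * tp_eval (tp_d1 P) x + of_real (snd h) * tp_eval (tp_d2 P) x))
        = (\<lambda>h. 0)" .
    from fun_cong[OF this, of "(1, 0)"] fun_cong[OF this, of "(0, 1)"] show ?thesis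
      by simp
  qed
  then show "real_tp (tp_d1 P)" "real_tp (tp_d2 P)"
    by (auto simp: real_tp_def)
qed

lemma tp_fn_mult:
  "real_tp P \<Longrightarrow> real_tp Q \<Longrightarrow> tp_fn P x * tp_fn Q x = Re (tp_eval P x * tp_eval Q x)"
  using real_tpD[of P x] real_tpD[of Q x] by (simp add: tp_fn_def)

lemma sum_list_mult_sum_list:
  "(\<Sum>p\<leftarrow>P. f p) * (\<Sum>q\<leftarrow>Q. g q) = (\<Sum>p\<leftarrow>P. \<Sum>q\<leftarrow>Q. (f p * g q :: 'a::comm_semiring_0))"
  by (induction P) (auto simp: algebra_simps sum_list_const_mult)

lemma tp_eval_d1: "tp_eval (tp_d1 P) x = (\<Sum>p\<leftarrow>P. \<i> * of_int (fst (snd p)) * fst p * wave (snd p) x)"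
  and tp_eval_d2: "tp_eval (tp_d2 P) x = (\<Sum>p\<leftarrow>P. \<i> * of_int (snd (snd p)) * fst p * wave (snd p) x)"
  by (induction P) auto

lemma tp_eval_tp_prod_cross:
  "tp_eval (tp_prod cross P Q) x =
     tp_eval (tp_d2 P) x * tp_eval (tp_d1 Q) x - tp_eval (tp_d1 P) x * tp_eval (tp_d2 Q) x"
  unfolding tp_eval_tp_prod tp_eval_d1 tp_eval_d2 sum_list_mult_sum_list sum_list_subtractf[symmetric]
  by (rule arg_cong[where f=sum_list], rule map_cong[OF refl])+
    (simp add: cross_def wave_add algebra_simps)

lemma tp_eval_tp_prod_grad:
  "tp_eval (tp_prod grad_kernel P Q) x =
     tp_eval (tp_d1 P) x * tp_eval (tp_d1 Q) x + tp_eval (tp_d2 P) x * tp_eval (tp_d2 Q) x"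
  unfolding tp_eval_tp_prod tp_eval_d1 tp_eval_d2 sum_list_mult_sum_list sum_list_addf[symmetric]
  by (rule arg_cong[where f=sum_list], rule map_cong[OF refl])+
    (simp add: grad_kernel_def dot_def wave_add algebra_simps)

lemma pbracket_tp_fn:
  assumes "real_tp P" "real_tp Q"
  shows "pbracket (tp_fn P) (tp_fn Q) = tp_fn (tp_prod cross P Q)"
proof
  fix x
  note r = real_tp_d1_d2[OF assms(1)] real_tp_d1_d2[OF assms(2)]
  show "pbracket (tp_fn P) (tp_fn Q) x = tp_fn (tp_prod cross P Q) x"
    unfolding pbracket_def pd1_tp_fn pd2_tp_fn tp_fn_mult[OF r(2) r(3)] tp_fn_mult[OF r(1) r(4)]
    by (simp add: tp_fn_def tp_eval_tp_prod_cross)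
qed

lemma ip_tp_fn:
  assumes "real_tp P" "real_tp Q"
  shows "ip (tp_fn P) (tp_fn Q) = S_T * Re (tp_coeff (tp_prod grad_kernel P Q) 0)"
proof -
  note r = real_tp_d1_d2[OF assms(1)] real_tp_d1_d2[OF assms(2)]
  have "(\<lambda>x. pd1 (tp_fn P) x * pd1 (tp_fn Q) x + pd2 (tp_fn P) x * pd2 (tp_fn Q) x)
      = tp_fn (tp_prod grad_kernel P Q)"
    unfolding pd1_tp_fn pd2_tp_fn tp_fn_mult[OF r(1) r(3)] tp_fn_mult[OF r(2) r(4)]
    by (simp add: tp_fn_def tp_eval_tp_prod_grad fun_eq_iff)
  then show ?thesis
    unfolding ip_def using has_integral_tp_fn integral_unique by metis
qed

lemma tp_fn_in_lie_alg:
  assumes "lie_tp P" "Re (tp_coeff P 0) = 0"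
  shows "tp_fn P \<in> lie_alg"
  unfolding lie_alg_def
proof (intro CollectI conjI allI)
  show "smooth_fn (tp_fn P)" by (rule smooth_fn_tp_fn)
  show "integral torus_box (tp_fn P) = 0"
    using has_integral_tp_fn[of P] assms(2) integral_unique by force
  fix x1 x2
  show "tp_fn P (x1 + 2 * pi, x2) = tp_fn P (x1, x2)" "tp_fn P (x1, x2 + 2 * pi) = tp_fn P (x1, x2)"
    by (rule tp_fn_periodic)+
  show "tp_fn P (2 * pi - x1, pi + x2) = - tp_fn P (x1, x2)"
    using assms(1) by (simp add: tp_fn_def lie_tp_def odd_tp_def)
qed

section \<open>Calculus on the torus\<close>

definition has_partials :: "fn \<Rightarrow> fn \<Rightarrow> fn \<Rightarrow> bool" where
  "has_partials f f1 f2 \<longleftrightarrow> (\<forall>x. (f has_derivative (\<lambda>h. fst h * f1 x + snd h * f2 x)) (at x))"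

lemma has_partialsD: "has_partials f f1 f2 \<Longrightarrow> (f has_derivative (\<lambda>h. fst h * f1 x + snd h * f2 x)) (at x)"
  unfolding has_partials_def by blast

lemma pd_eq_if_has_partials:
  assumes "has_partials f f1 f2"
  shows "pd1 f = f1" "pd2 f = f2"
proof -
  have "frechet_derivative f (at x) = (\<lambda>h. fst h * f1 x + snd h * f2 x)" for x
    by (rule frechet_derivative_at[OF has_partialsD[OF assms], symmetric])
  then show "pd1 f = f1" "pd2 f = f2"
    unfolding pd1_def pd2_def by simp_all
qed

lemma has_derivative_pd:
  assumes "f differentiable (at x)"
  shows "(f has_derivative (\<lambda>h. fst h * pd1 f x + snd h * pd2 f x)) (at x)"
proof -
  let ?D = "frechet_derivative f (at x)"
  have D: "(f has_derivative ?D) (at x)"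
    using assms by (rule frechet_derivative_works[THEN iffD1])
  then have lin: "linear ?D"
    using has_derivative_linear by blast
  have "?D h = fst h * ?D (1, 0) + snd h * ?D (0, 1)" for h
  proof -
    have "h = fst h *\<^sub>R (1, 0) + snd h *\<^sub>R (0, 1)" by (cases h) simp
    then have "?D h = ?D (fst h *\<^sub>R (1, 0) + snd h *\<^sub>R (0, 1))" by (rule arg_cong)
    also have "\<dots> = fst h * ?D (1, 0) + snd h * ?D (0, 1)"
      by (simp only: linear_add[OF lin] linear_scale[OF lin] real_scaleR_def)
    finally show ?thesis .
  qed
  then have "?D = (\<lambda>h. fst h * ?D (1, 0) + snd h * ?D (0, 1))"
    by (rule ext)
  from has_derivative_eq_rhs[OF D this] show ?thesis
    unfolding pd1_def pd2_def .
qed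

lemma has_partials_pd: "(\<And>x. f differentiable (at x)) \<Longrightarrow> has_partials f (pd1 f) (pd2 f)"
  unfolding has_partials_def using has_derivative_pd by blast

lemma has_partials_mult:
  assumes "has_partials f f1 f2" "has_partials g g1 g2"
  shows "has_partials (\<lambda>x. f x * g x) (\<lambda>x. f1 x * g x + f x * g1 x) (\<lambda>x. f2 x * g x + f x * g2 x)"
  unfolding has_partials_def
proof
  fix x
  show "((\<lambda>x. f x * g x) has_derivative
      (\<lambda>h. fst h * (f1 x * g x + f x * g1 x) + snd h * (f2 x * g x + f x * g2 x))) (at x)"
    using has_derivative_mult[OF has_partialsD[OF assms(1)] has_partialsD[OF assms(2)]]
    by (rule has_derivative_eq_rhs) (simp add: fun_eq_iff algebra_simps)
qed

lemma has_partials_diff: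
  assumes "has_partials f f1 f2" "has_partials g g1 g2"
  shows "has_partials (\<lambda>x. f x - g x) (\<lambda>x. f1 x - g1 x) (\<lambda>x. f2 x - g2 x)"
  unfolding has_partials_def
proof
  fix x
  show "((\<lambda>x. f x - g x) has_derivative (\<lambda>h. fst h * (f1 x - g1 x) + snd h * (f2 x - g2 x))) (at x)"
    using has_derivative_diff[OF has_partialsD[OF assms(1)] has_partialsD[OF assms(2)]]
    by (rule has_derivative_eq_rhs) (simp add: fun_eq_iff algebra_simps)
qed

lemma integral_torus_box_iterated:
  fixes f :: fn
  shows "continuous_on UNIV f \<Longrightarrow>
    integral torus_box f = integral {0..2 * pi} (\<lambda>x. integral {0..2 * pi} (\<lambda>y. f (x, y)))"
  unfolding torus_box_def
  using integral_prod_continuous[of 0 0 "2 * pi" "2 * pi" f] continuous_on_subset[of UNIV f]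
  by (simp add: cbox_interval)

lemma integral_derivative_periodic_eq_0:
  assumes "\<And>t. (g has_real_derivative g' t) (at t)" and "g (2 * pi) = g 0"
  shows "integral {0..2 * pi} g' = 0"
proof -
  have "(g' has_integral (g (2 * pi) - g 0)) {0..2 * pi}"
    by (rule fundamental_theorem_of_calculus)
      (auto intro: has_field_derivative_at_within assms(1) simp: has_real_derivative_iff_has_vector_derivative[symmetric])
  then show ?thesis
    using assms(2) by (simp add: integral_unique)
qed

lemma integral_torus_pd1_periodic:
  assumes f: "has_partials f f1 f2" and "continuous_on UNIV f1"
    and "\<And>x1 x2. f (x1 + 2 * pi, x2) = f (x1, x2)"
  shows "integral torus_box f1 = 0"
proof -
  have inner: "integral {0..2 * pi} (\<lambda>x. f1 (x, y)) = 0" for y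
  proof (rule integral_derivative_periodic_eq_0)
    fix t :: real
    have "((\<lambda>t. (t, y)) has_derivative (\<lambda>h. (h, 0))) (at t)"
      by (auto intro!: derivative_eq_intros)
    from has_derivative_compose[OF this has_partialsD[OF f]]
    show "((\<lambda>t. f (t, y)) has_real_derivative f1 (t, y)) (at t)"
      unfolding has_field_derivative_def by (rule has_derivative_eq_rhs) (simp add: fun_eq_iff mult.commute)
  qed (use assms(3)[of 0 y] in simp)
  have "integral torus_box f1 = integral {0..2 * pi} (\<lambda>x. integral {0..2 * pi} (\<lambda>y. f1 (x, y)))"
    by (rule integral_torus_box_iterated[OF assms(2)])
  also have "\<dots> = integral {0..2 * pi} (\<lambda>y. integral {0..2 * pi} (\<lambda>x. f1 (x, y)))"
    using integral_swap_continuous[of 0 0 "2 * pi" "2 * pi" "\<lambda>x y. f1 (x, y)"]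
      continuous_on_subset[OF assms(2)]
    by (simp add: cbox_interval)
  finally show ?thesis
    by (simp add: inner)
qed

lemma integral_torus_pd2_periodic:
  assumes f: "has_partials f f1 f2" and "continuous_on UNIV f2"
    and "\<And>x1 x2. f (x1, x2 + 2 * pi) = f (x1, x2)"
  shows "integral torus_box f2 = 0"
proof -
  have inner: "integral {0..2 * pi} (\<lambda>y. f2 (x, y)) = 0" for x
  proof (rule integral_derivative_periodic_eq_0)
    fix t :: real
    have "((\<lambda>t. (x, t)) has_derivative (\<lambda>h. (0, h))) (at t)"
      by (auto intro!: derivative_eq_intros)
    from has_derivative_compose[OF this has_partialsD[OF f]]
    show "((\<lambda>t. f (x, t)) has_real_derivative f2 (x, t)) (at t)"
      unfolding has_field_derivative_def by (rule has_derivative_eq_rhs) (simp add: fun_eq_iff mult.commute)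
  qed (use assms(3)[of x 0] in simp)
  then show ?thesis
    by (simp add: integral_torus_box_iterated[OF assms(2)])
qed

lemma differentiable_at_imp_continuous_on:
  "(\<And>x. f differentiable (at x)) \<Longrightarrow> continuous_on S f"
  by (meson continuous_at_imp_continuous_on differentiable_imp_continuous_within)

lemma pd_mult:
  assumes "\<And>x. f differentiable (at x)" "\<And>x. g differentiable (at x)"
  shows "pd1 (\<lambda>x. f x * g x) = (\<lambda>x. pd1 f x * g x + f x * pd1 g x)"
    "pd2 (\<lambda>x. f x * g x) = (\<lambda>x. pd2 f x * g x + f x * pd2 g x)"
  using pd_eq_if_has_partials[OF has_partials_mult[OF has_partials_pd has_partials_pd]] assms
  by blast+

lemma pd_diff:
  assumes "\<And>x. f differentiable (at x)" "\<And>x. g differentiable (at x)"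
  shows "pd1 (\<lambda>x. f x - g x) = (\<lambda>x. pd1 f x - pd1 g x)"
    "pd2 (\<lambda>x. f x - g x) = (\<lambda>x. pd2 f x - pd2 g x)"
  using pd_eq_if_has_partials[OF has_partials_diff[OF has_partials_pd has_partials_pd]] assms
  by blast+

lemma smooth_fn_differentiable: "smooth_fn f \<Longrightarrow> f differentiable (at x)"
  unfolding smooth_fn_def by (metis foldr.simps(1) id_apply)

lemma smooth_fn_pd:
  assumes "smooth_fn f"
  shows "smooth_fn (pd1 f)" "smooth_fn (pd2 f)"
proof -
  have "foldr pd ds (pd b f) = foldr pd (ds @ [b]) f" for ds b
    by simp
  then have "smooth_fn (pd b f)" for b
    using assms unfolding smooth_fn_def by metis
  from this[of False] this[of True] show "smooth_fn (pd1 f)" "smooth_fn (pd2 f)"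
    by simp_all
qed

lemma smooth_fn_diff:
  assumes "smooth_fn f" "smooth_fn g"
  shows "smooth_fn (\<lambda>x. f x - g x)"
proof -
  have diff: "foldr pd ds (\<lambda>x. f x - g x) = (\<lambda>x. foldr pd ds f x - foldr pd ds g x)" for ds
  proof (induction ds)
    case Nil
    then show ?case by simp
  next
    case (Cons b ds)
    have "\<And>x. foldr pd ds f differentiable (at x)" "\<And>x. foldr pd ds g differentiable (at x)"
      using assms unfolding smooth_fn_def by blast+
    from pd_diff[OF this] show ?case
      using Cons by (cases b) simp_all
  qed
  have "(\<lambda>x. foldr pd ds f x - foldr pd ds g x) differentiable (at x)" for ds x
    using assms unfolding smooth_fn_def by (blast intro: differentiable_diff)
  then show ?thesis
    unfolding smooth_fn_def diff by simp
qed

definition torus_periodic :: "fn \<Rightarrow> bool" where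
  "torus_periodic f \<longleftrightarrow> (\<forall>x1 x2. f (x1 + 2 * pi, x2) = f (x1, x2) \<and> f (x1, x2 + 2 * pi) = f (x1, x2))"

definition torus_C1 :: "fn \<Rightarrow> bool" where
  "torus_C1 f \<longleftrightarrow> torus_periodic f \<and> (\<forall>x. f differentiable (at x))
     \<and> continuous_on UNIV (pd1 f) \<and> continuous_on UNIV (pd2 f)"

lemma torus_C1D:
  assumes "torus_C1 f"
  shows "torus_periodic f" "f differentiable (at x)" "continuous_on UNIV (pd1 f)" "continuous_on UNIV (pd2 f)"
  using assms unfolding torus_C1_def by blast+

lemma pd_translation_invariant:
  assumes "\<And>x. f differentiable (at x)" and "\<And>x. f (x + t) = f x"
  shows "pd1 f (x + t) = pd1 f x" "pd2 f (x + t) = pd2 f x"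
proof -
  have "((\<lambda>x. x + t) has_derivative (\<lambda>h. h)) (at x)"
    by (auto intro!: derivative_eq_intros)
  from has_derivative_compose[OF this has_derivative_pd[OF assms(1)]]
  have "((\<lambda>x. f (x + t)) has_derivative (\<lambda>h. fst h * pd1 f (x + t) + snd h * pd2 f (x + t))) (at x)"
    by simp
  then have "(f has_derivative (\<lambda>h. fst h * pd1 f (x + t) + snd h * pd2 f (x + t))) (at x)"
    using assms(2) by simp
  from has_derivative_unique[OF this has_derivative_pd[OF assms(1)]]
  have "(\<lambda>h. fst h * pd1 f (x + t) + snd h * pd2 f (x + t)) = (\<lambda>h. fst h * pd1 f x + snd h * pd2 f x)" .
  from fun_cong[OF this, of "(1, 0)"] fun_cong[OF this, of "(0, 1)"]
  show "pd1 f (x + t) = pd1 f x" "pd2 f (x + t) = pd2 f x"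
    by simp_all
qed

lemma torus_periodic_pd:
  assumes "torus_periodic f" "\<And>x. f differentiable (at x)"
  shows "torus_periodic (pd1 f)" "torus_periodic (pd2 f)"
proof -
  have "f (x + (2 * pi, 0)) = f x" "f (x + (0, 2 * pi)) = f x" for x
    using assms(1) by (cases x; simp add: torus_periodic_def)+
  note inv = pd_translation_invariant[OF assms(2) this(1)] pd_translation_invariant[OF assms(2) this(2)]
  show "torus_periodic (pd1 f)" "torus_periodic (pd2 f)"
    unfolding torus_periodic_def
    using inv[where x="(x1, x2)" for x1 x2] by simp_all
qed

lemma torus_C1_if_smooth: "smooth_fn f \<Longrightarrow> torus_periodic f \<Longrightarrow> torus_C1 f"
  unfolding torus_C1_def
  by (metis differentiable_at_imp_continuous_on smooth_fn_differentiable smooth_fn_pd)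

lemma torus_C1_tp_fn: "torus_C1 (tp_fn P)"
  by (rule torus_C1_if_smooth[OF smooth_fn_tp_fn]) (simp add: torus_periodic_def tp_fn_periodic)

lemma torus_C1_lie_alg:
  assumes "w \<in> lie_alg"
  shows "torus_C1 w" "torus_C1 (pd1 w)" "torus_C1 (pd2 w)"
proof -
  have w: "smooth_fn w" "torus_periodic w"
    using assms by (simp_all add: lie_alg_def torus_periodic_def)
  then show "torus_C1 w"
    by (rule torus_C1_if_smooth)
  from torus_periodic_pd[OF w(2) smooth_fn_differentiable[OF w(1)]]
  show "torus_C1 (pd1 w)" "torus_C1 (pd2 w)"
    by (simp_all add: torus_C1_if_smooth smooth_fn_pd[OF w(1)])
qed

lemma torus_C1_continuous_on: "torus_C1 f \<Longrightarrow> continuous_on S f"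
  using torus_C1D(2) differentiable_at_imp_continuous_on by blast

lemma torus_C1_mult:
  assumes f: "torus_C1 f" and g: "torus_C1 g"
  shows "torus_C1 (\<lambda>x. f x * g x)"
  unfolding torus_C1_def
proof (intro conjI allI)
  show "torus_periodic (\<lambda>x. f x * g x)"
    using f g by (simp add: torus_C1_def torus_periodic_def)
  show "(\<lambda>x. f x * g x) differentiable (at x)" for x
    using f g by (simp add: torus_C1D differentiable_mult)
  have "continuous_on UNIV f" "continuous_on UNIV g"
    using f g by (simp_all add: torus_C1_continuous_on)
  then show "continuous_on UNIV (pd1 (\<lambda>x. f x * g x))" "continuous_on UNIV (pd2 (\<lambda>x. f x * g x))"
    using f g by (simp_all add: torus_C1D pd_mult continuous_intros)
qed

lemma torus_C1_diff:
  assumes f: "torus_C1 f" and g: "torus_C1 g"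
  shows "torus_C1 (\<lambda>x. f x - g x)"
  unfolding torus_C1_def
proof (intro conjI allI)
  show "torus_periodic (\<lambda>x. f x - g x)"
    using f g by (simp add: torus_C1_def torus_periodic_def)
  show "(\<lambda>x. f x - g x) differentiable (at x)" for x
    using f g by (simp add: torus_C1D differentiable_diff)
  show "continuous_on UNIV (pd1 (\<lambda>x. f x - g x))" "continuous_on UNIV (pd2 (\<lambda>x. f x - g x))"
    using f g by (simp_all add: torus_C1D pd_diff continuous_intros)
qed

lemma integrable_on_torus_box: "continuous_on UNIV f \<Longrightarrow> f integrable_on torus_box"
  for f :: fn
  unfolding torus_box_def by (blast intro: integrable_continuous continuous_on_subset)

lemma integral_torus_by_parts:
  assumes f: "torus_C1 f" and g: "torus_C1 g"
  shows "integral torus_box (\<lambda>x. f x * pd1 g x) = - integral torus_box (\<lambda>x. pd1 f x * g x)"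
    "integral torus_box (\<lambda>x. f x * pd2 g x) = - integral torus_box (\<lambda>x. pd2 f x * g x)"
proof -
  have fg: "torus_C1 (\<lambda>x. f x * g x)"
    by (rule torus_C1_mult[OF f g])
  have d: "\<And>x. f differentiable (at x)" "\<And>x. g differentiable (at x)"
    using f g by (simp_all add: torus_C1D)
  have H: "has_partials (\<lambda>x. f x * g x) (pd1 (\<lambda>x. f x * g x)) (pd2 (\<lambda>x. f x * g x))"
    using fg by (simp add: torus_C1D has_partials_pd)
  have c: "continuous_on UNIV f" "continuous_on UNIV g" "continuous_on UNIV (pd1 f)"
    "continuous_on UNIV (pd2 f)" "continuous_on UNIV (pd1 g)" "continuous_on UNIV (pd2 g)"
    using f g by (simp_all add: torus_C1D torus_C1_continuous_on)
  have int: "(\<lambda>x. a x * b x) integrable_on torus_box"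
    if "continuous_on UNIV a" "continuous_on UNIV b" for a b :: fn
    by (intro integrable_on_torus_box continuous_intros that)
  have "integral torus_box (pd1 (\<lambda>x. f x * g x)) = 0"
    by (rule integral_torus_pd1_periodic[OF H]) (use fg torus_C1D[OF fg] in \<open>simp_all add: torus_periodic_def\<close>)
  then have "integral torus_box (\<lambda>x. pd1 f x * g x) + integral torus_box (\<lambda>x. f x * pd1 g x) = 0"
    unfolding pd_mult[OF d] by (simp add: integral_add int c)
  then show "integral torus_box (\<lambda>x. f x * pd1 g x) = - integral torus_box (\<lambda>x. pd1 f x * g x)"
    by simp
  have "integral torus_box (pd2 (\<lambda>x. f x * g x)) = 0"
    by (rule integral_torus_pd2_periodic[OF H]) (use fg torus_C1D[OF fg] in \<open>simp_all add: torus_periodic_def\<close>)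
  then have "integral torus_box (\<lambda>x. pd2 f x * g x) + integral torus_box (\<lambda>x. f x * pd2 g x) = 0"
    unfolding pd_mult[OF d] by (simp add: integral_add int c)
  then show "integral torus_box (\<lambda>x. f x * pd2 g x) = - integral torus_box (\<lambda>x. pd2 f x * g x)"
    by simp
qed

section \<open>The operator \<open>B\<close>\<close>

definition tp_lap :: "tpoly \<Rightarrow> tpoly" where
  "tp_lap P = tp_d1 (tp_d1 P) @ tp_d2 (tp_d2 P)"

lemma real_tp_tp_lap: "real_tp P \<Longrightarrow> real_tp (tp_lap P)"
  unfolding tp_lap_def by (intro real_tp_append real_tp_d1_d2)

lemma ip_tp_fn_eq_integral_lap:
  assumes "torus_C1 g"
  shows "ip (tp_fn P) g = - integral torus_box (\<lambda>x. tp_fn (tp_lap P) x * g x)"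
proof -
  have c: "continuous_on UNIV g" "continuous_on UNIV (pd1 g)" "continuous_on UNIV (pd2 g)"
    using assms by (simp_all add: torus_C1D torus_C1_continuous_on)
  have int: "(\<lambda>x. tp_fn Q x * h x) integrable_on torus_box" if "continuous_on UNIV h" for Q h
    by (intro integrable_on_torus_box continuous_intros continuous_on_tp_fn that)
  have "ip (tp_fn P) g = integral torus_box (\<lambda>x. tp_fn (tp_d1 P) x * pd1 g x)
      + integral torus_box (\<lambda>x. tp_fn (tp_d2 P) x * pd2 g x)"
    unfolding ip_def pd1_tp_fn pd2_tp_fn by (rule integral_add) (use int c in auto)
  also have "\<dots> = - integral torus_box (\<lambda>x. tp_fn (tp_d1 (tp_d1 P)) x * g x)
      - integral torus_box (\<lambda>x. tp_fn (tp_d2 (tp_d2 P)) x * g x)"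
    using integral_torus_by_parts[OF torus_C1_tp_fn assms] by simp
  also have "\<dots> = - integral torus_box (\<lambda>x. tp_fn (tp_lap P) x * g x)"
    unfolding tp_lap_def tp_fn_append distrib_right by (subst integral_add) (use int c in auto)
  finally show ?thesis .
qed

lemma integral_mult_pbracket:
  assumes w: "torus_C1 w"
  shows "integral torus_box (\<lambda>x. tp_fn A x * pbracket (tp_fn V) w x)
    = integral torus_box (\<lambda>x. pbracket (tp_fn A) (tp_fn V) x * w x)"
proof -
  let ?f = "\<lambda>x. tp_fn A x * tp_fn (tp_d2 V) x" and ?g = "\<lambda>x. tp_fn A x * tp_fn (tp_d1 V) x"
  have C1: "torus_C1 ?f" "torus_C1 ?g"
    by (simp_all add: torus_C1_mult torus_C1_tp_fn)
  have c: "continuous_on UNIV w" "continuous_on UNIV (pd1 w)" "continuous_on UNIV (pd2 w)"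
    using w by (simp_all add: torus_C1D torus_C1_continuous_on)
  have "(\<lambda>x. tp_fn A x * pbracket (tp_fn V) w x) = (\<lambda>x. ?f x * pd1 w x - ?g x * pd2 w x)"
    by (simp add: pbracket_def fun_eq_iff algebra_simps)
  then have "integral torus_box (\<lambda>x. tp_fn A x * pbracket (tp_fn V) w x)
      = integral torus_box (\<lambda>x. ?f x * pd1 w x) - integral torus_box (\<lambda>x. ?g x * pd2 w x)"
    by (simp add: integral_diff integrable_on_torus_box continuous_intros continuous_on_tp_fn c)
  also have "\<dots> = integral torus_box (\<lambda>x. pd2 ?g x * w x) - integral torus_box (\<lambda>x. pd1 ?f x * w x)"
    using integral_torus_by_parts(1)[OF C1(1) w] integral_torus_by_parts(2)[OF C1(2) w] by simp
  also have "\<dots> = integral torus_box (\<lambda>x. pbracket (tp_fn A) (tp_fn V) x * w x)"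
  proof -
    have "(\<lambda>x. pbracket (tp_fn A) (tp_fn V) x * w x) = (\<lambda>x. pd2 ?g x * w x - pd1 ?f x * w x)"
      unfolding pd_mult[OF tp_fn_differentiable tp_fn_differentiable] pbracket_def
      by (simp add: fun_eq_iff tp_d1_d2_commute algebra_simps)
    then show ?thesis
      unfolding pd_mult[OF tp_fn_differentiable tp_fn_differentiable]
      by (simp add: integral_diff integrable_on_torus_box continuous_intros continuous_on_tp_fn c)
  qed
  finally show ?thesis .
qed

text \<open>For \<open>m + n = 0\<close> the division by zero is harmless because then \<open>m \<times> n = 0\<close>.\<close>

definition B_kernel :: "mode \<Rightarrow> mode \<Rightarrow> real" where
  "B_kernel m n = cross m n * norm2 m / norm2 (m + n)"

lemma B_kernel_symmetries:
  "B_kernel (- m) (- n) = B_kernel m n" "B_kernel (mode_refl m) (mode_refl n) = - B_kernel m n"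
  unfolding B_kernel_def mode_refl_add[symmetric] using norm2_symmetries(1)[of "m + n"] by simp_all

lemma tp_eval_tp_lap:
  "tp_eval (tp_lap P) x = tp_eval (map (\<lambda>q. (- of_real (norm2 (snd q)) * fst q, snd q)) P) x"
  unfolding tp_lap_def by (induction P) (auto simp: norm2_def algebra_simps)

lemma tp_eval_tp_lap_tp_prod:
  "tp_eval (tp_lap (tp_prod \<phi> P Q)) x = tp_eval (tp_prod (\<lambda>m n. - norm2 (m + n) * \<phi> m n) P Q) x"
  unfolding tp_eval_tp_lap by (simp add: tp_prod_def map_concat o_def algebra_simps)

lemma tp_eval_tp_prod_tp_lap:
  "tp_eval (tp_prod \<phi> (tp_lap P) Q) x = tp_eval (tp_prod (\<lambda>m n. - norm2 m * \<phi> m n) P Q) x"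
  unfolding tp_lap_def tp_prod_append_left tp_eval_append tp_eval_tp_prod
  by (simp add: tp_d1_def tp_d2_def o_def sum_list_addf[symmetric] norm2_def algebra_simps)

lemma tp_eval_tp_lap_B:
  "tp_eval (tp_lap (tp_prod B_kernel P Q)) x = tp_eval (tp_prod cross (tp_lap P) Q) x"
proof -
  have "- norm2 (m + n) * B_kernel m n = - norm2 m * cross m n" for m n
    by (cases "m + n = 0") (simp_all add: B_kernel_def norm2_eq_0_iff cross_eq_0_if_add_eq_0)
  then show ?thesis
    unfolding tp_eval_tp_lap_tp_prod tp_eval_tp_prod_tp_lap by simp
qed

lemma ip_B_tp_fn:
  assumes U: "real_tp U" and V: "real_tp V" and w: "w \<in> lie_alg"
  shows "ip (tp_fn (tp_prod B_kernel U V)) w = ip (tp_fn U) (pbracket (tp_fn V) w)"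
proof -
  note C1 = torus_C1_lie_alg[OF w]
  have "pbracket (tp_fn V) w = (\<lambda>x. tp_fn (tp_d2 V) x * pd1 w x - tp_fn (tp_d1 V) x * pd2 w x)"
    by (simp add: pbracket_def fun_eq_iff)
  then have C1_bracket: "torus_C1 (pbracket (tp_fn V) w)"
    by (simp add: torus_C1_diff torus_C1_mult torus_C1_tp_fn C1)
  have lap: "tp_fn (tp_lap (tp_prod B_kernel U V)) = pbracket (tp_fn (tp_lap U)) (tp_fn V)"
    unfolding pbracket_tp_fn[OF real_tp_tp_lap[OF U] V] by (simp add: tp_fn_def tp_eval_tp_lap_B)
  have "ip (tp_fn (tp_prod B_kernel U V)) w
      = - integral torus_box (\<lambda>x. pbracket (tp_fn (tp_lap U)) (tp_fn V) x * w x)"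
    by (simp add: ip_tp_fn_eq_integral_lap[OF C1(1)] lap)
  also have "\<dots> = - integral torus_box (\<lambda>x. tp_fn (tp_lap U) x * pbracket (tp_fn V) w x)"
    by (simp add: integral_mult_pbracket[OF C1(1)])
  also have "\<dots> = ip (tp_fn U) (pbracket (tp_fn V) w)"
    by (simp add: ip_tp_fn_eq_integral_lap[OF C1_bracket])
  finally show ?thesis .
qed

lemma lie_alg_diff:
  assumes "f \<in> lie_alg" "g \<in> lie_alg"
  shows "(\<lambda>x. f x - g x) \<in> lie_alg"
proof -
  have "smooth_fn f" "smooth_fn g"
    using assms by (simp_all add: lie_alg_def)
  moreover have "continuous_on UNIV f" "continuous_on UNIV g"
    using assms by (simp_all add: torus_C1_lie_alg torus_C1_continuous_on)
  then have "integral torus_box (\<lambda>x. f x - g x) = integral torus_box f - integral torus_box g"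
    by (simp add: integral_diff integrable_on_torus_box)
  ultimately show ?thesis
    using assms smooth_fn_diff by (auto simp: lie_alg_def)
qed

lemma ip_diff_left:
  assumes f: "torus_C1 f" and h: "torus_C1 h" and g: "torus_C1 g"
  shows "ip (\<lambda>x. f x - h x) g = ip f g - ip h g"
proof -
  have c: "continuous_on UNIV (pd1 f)" "continuous_on UNIV (pd2 f)" "continuous_on UNIV (pd1 h)"
    "continuous_on UNIV (pd2 h)" "continuous_on UNIV (pd1 g)" "continuous_on UNIV (pd2 g)"
    using f g h by (simp_all add: torus_C1D)
  have "ip (\<lambda>x. f x - h x) g = integral torus_box
      (\<lambda>x. (pd1 f x * pd1 g x + pd2 f x * pd2 g x) - (pd1 h x * pd1 g x + pd2 h x * pd2 g x))"
    unfolding ip_def pd_diff[OF torus_C1D(2)[OF f] torus_C1D(2)[OF h]] by (simp add: algebra_simps)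
  also have "\<dots> = ip f g - ip h g"
    unfolding ip_def by (simp add: integral_diff integrable_on_torus_box continuous_intros c)
  finally show ?thesis .
qed

lemma torus_periodic_int_shift:
  assumes "torus_periodic f"
  shows "f (x1 + of_int j * (2 * pi), x2 + of_int k * (2 * pi)) = f (x1, x2)"
proof -
  have p1: "f (y1 + 2 * pi, y2) = f (y1, y2)" and p2: "f (y1, y2 + 2 * pi) = f (y1, y2)" for y1 y2
    using assms by (simp_all add: torus_periodic_def)
  have 1: "f (y1 + of_int j * (2 * pi), y2) = f (y1, y2)" for y1 y2
  proof (induction j arbitrary: y1 rule: int_induct[where k=0])
    case (step1 i)
    then show ?case using p1[of "y1 + of_int i * (2 * pi)" y2] by (simp add: algebra_simps)
  next
    case (step2 i)
    then show ?case using p1[of "y1 + of_int (i - 1) * (2 * pi)" y2] by (simp add: algebra_simps)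
  qed simp
  have 2: "f (y1, y2 + of_int k * (2 * pi)) = f (y1, y2)" for y1 y2
  proof (induction k arbitrary: y2 rule: int_induct[where k=0])
    case (step1 i)
    then show ?case using p2[of y1 "y2 + of_int i * (2 * pi)"] by (simp add: algebra_simps)
  next
    case (step2 i)
    then show ?case using p2[of y1 "y2 + of_int (i - 1) * (2 * pi)"] by (simp add: algebra_simps)
  qed simp
  show ?thesis
    by (simp only: 1 2)
qed

lemma ex_int_shift_into_period: "\<exists>k::int. t - of_int k * (2 * pi) \<in> {0..2 * pi}"
proof -
  let ?k = "\<lfloor>t / (2 * pi)\<rfloor>"
  have "of_int ?k \<le> t / (2 * pi)" "t / (2 * pi) < of_int ?k + 1"
    by linarith+
  then have "of_int ?k * (2 * pi) \<le> t / (2 * pi) * (2 * pi)"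
    "t / (2 * pi) * (2 * pi) < (of_int ?k + 1) * (2 * pi)"
    by (intro mult_right_mono mult_strict_right_mono; simp)+
  then show ?thesis
    by (intro exI[of _ ?k]) (simp add: algebra_simps)
qed

lemma torus_periodic_const_if_const_on_box:
  assumes "torus_periodic f" and "\<And>x. x \<in> torus_box \<Longrightarrow> f x = c"
  shows "f x = c"
proof -
  obtain x1 x2 where x: "x = (x1, x2)" by (cases x)
  obtain j k :: int where jk: "x1 - of_int j * (2 * pi) \<in> {0..2 * pi}" "x2 - of_int k * (2 * pi) \<in> {0..2 * pi}"
    using ex_int_shift_into_period by metis
  have "f x = f (x1 - of_int j * (2 * pi), x2 - of_int k * (2 * pi))"
    using torus_periodic_int_shift[OF assms(1), of "x1 - of_int j * (2 * pi)" j "x2 - of_int k * (2 * pi)" k]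
    by (simp add: x)
  also have "\<dots> = c"
    using jk by (intro assms(2)) (simp add: torus_box_def cbox_Pair_iff)
  finally show ?thesis .
qed

lemma pd_eq_0_if_ip_self_eq_0:
  assumes g: "torus_C1 g" and "ip g g = 0" and "x \<in> torus_box"
  shows "pd1 g x = 0" "pd2 g x = 0"
proof -
  let ?h = "\<lambda>x. pd1 g x * pd1 g x + pd2 g x * pd2 g x"
  have ch: "continuous_on (cbox (0, 0) (2 * pi, 2 * pi)) ?h"
    using torus_C1D(3,4)[OF g] by (intro continuous_intros) (auto intro: continuous_on_subset)
  have "(?h has_integral 0) (cbox (0, 0) (2 * pi, 2 * pi))"
    using integrable_integral[OF integrable_continuous[OF ch]] assms(2) by (simp add: ip_def torus_box_def)
  moreover have "box (0, 0) (2 * pi, 2 * pi) \<noteq> ({} :: (real \<times> real) set)"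
    by (simp add: box_ne_empty Basis_prod_def)
  ultimately have "?h x = 0"
    using has_integral_0_cbox_imp_0[OF ch, of x] assms(3) by (simp add: torus_box_def)
  then show "pd1 g x = 0" "pd2 g x = 0"
    by (simp_all add: sum_squares_eq_zero_iff)
qed

text \<open>Zero gradient forces a constant, and a constant of zero mean vanishes.\<close>

lemma lie_alg_eq_0_if_ip_self_eq_0:
  assumes g: "g \<in> lie_alg" and "ip g g = 0"
  shows "g = (\<lambda>x. 0)"
proof -
  note C1 = torus_C1_lie_alg(1)[OF g]
  have "\<exists>c. \<forall>x\<in>torus_box. g x = c"
  proof (rule has_derivative_zero_constant)
    show "convex torus_box"
      by (simp add: torus_box_def convex_box)
    fix x assume "x \<in> torus_box"
    have "(g has_derivative (\<lambda>h. fst h * pd1 g x + snd h * pd2 g x)) (at x within torus_box)"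
      by (rule has_derivative_at_withinI[OF has_derivative_pd[OF torus_C1D(2)[OF C1]]])
    then show "(g has_derivative (\<lambda>h. 0)) (at x within torus_box)"
      using pd_eq_0_if_ip_self_eq_0[OF C1 assms(2) \<open>x \<in> torus_box\<close>] by simp
  qed
  then obtain c where "\<And>x. x \<in> torus_box \<Longrightarrow> g x = c"
    by blast
  from torus_periodic_const_if_const_on_box[OF torus_C1D(1)[OF C1] this]
  have gc: "g = (\<lambda>x. c)"
    by blast
  have "c * S_T = integral torus_box g"
    by (simp add: gc torus_box_def S_T_def content_Pair power2_eq_square mult.commute)
  also have "\<dots> = 0"
    using g by (simp add: lie_alg_def)
  finally show ?thesis
    by (simp add: gc S_T_def)
qed

lemma Bop_eqI:
  assumes b: "b \<in> lie_alg" and hb: "\<And>w. w \<in> lie_alg \<Longrightarrow> ip b w = ip u (pbracket v w)"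
  shows "Bop u v = b"
  unfolding Bop_def
proof (rule the_equality)
  show "b \<in> lie_alg \<and> (\<forall>w\<in>lie_alg. ip b w = ip u (pbracket v w))"
    using b hb by blast
  fix b' assume "b' \<in> lie_alg \<and> (\<forall>w\<in>lie_alg. ip b' w = ip u (pbracket v w))"
  then have b': "b' \<in> lie_alg" and hb': "\<And>w. w \<in> lie_alg \<Longrightarrow> ip b' w = ip u (pbracket v w)"
    by auto
  let ?g = "\<lambda>x. b' x - b x"
  have g: "?g \<in> lie_alg"
    by (rule lie_alg_diff[OF b' b])
  have "ip ?g ?g = ip b' ?g - ip b ?g"
    by (rule ip_diff_left) (simp_all add: torus_C1_lie_alg b b' g)
  also have "\<dots> = 0"
    using hb hb' g by simp
  finally have "?g = (\<lambda>x. 0)"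
    by (rule lie_alg_eq_0_if_ip_self_eq_0[OF g])
  then show "b' = b"
    by (auto simp: fun_eq_iff dest: fun_cong)
qed

lemma Bop_tp_fn:
  assumes U: "lie_tp U" and V: "lie_tp V"
  shows "Bop (tp_fn U) (tp_fn V) = tp_fn (tp_prod B_kernel U V)"
proof (rule Bop_eqI)
  have "lie_tp (tp_prod B_kernel U V)"
    by (rule lie_tp_tp_prod[OF U V]) (simp_all add: B_kernel_symmetries)
  moreover have "B_kernel m n = 0" if "m + n = 0" for m n
    using that by (simp add: B_kernel_def norm2_eq_0_iff)
  then have "tp_coeff (tp_prod B_kernel U V) 0 = 0"
    by (simp add: tp_coeff_tp_prod cong: if_cong)
  ultimately show "tp_fn (tp_prod B_kernel U V) \<in> lie_alg"
    by (simp add: tp_fn_in_lie_alg)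
  show "ip (tp_fn (tp_prod B_kernel U V)) w = ip (tp_fn U) (pbracket (tp_fn V) w)" if "w \<in> lie_alg" for w
    using ip_B_tp_fn U V that by (simp add: lie_tp_def)
qed

section \<open>Connection and curvature\<close>

definition conn_kernel :: "mode \<Rightarrow> mode \<Rightarrow> real" where
  "conn_kernel m n = (cross m n - B_kernel m n - B_kernel n m) / 2"

lemma conn_kernel_symmetries:
  "conn_kernel (- m) (- n) = conn_kernel m n"
  "conn_kernel (mode_refl m) (mode_refl n) = - conn_kernel m n"
  by (simp_all add: conn_kernel_def B_kernel_symmetries field_simps)

lemma lie_tp_conn: "lie_tp P \<Longrightarrow> lie_tp Q \<Longrightarrow> lie_tp (tp_prod conn_kernel P Q)"
  by (rule lie_tp_tp_prod) (simp_all add: conn_kernel_symmetries)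

lemma lie_tp_cross: "lie_tp P \<Longrightarrow> lie_tp Q \<Longrightarrow> lie_tp (tp_prod cross P Q)"
  by (rule lie_tp_tp_prod) simp_all

lemma tp_eval_tp_prod_conn:
  "tp_eval (tp_prod conn_kernel P Q) x =
     (tp_eval (tp_prod cross P Q) x - tp_eval (tp_prod B_kernel P Q) x - tp_eval (tp_prod B_kernel Q P) x) / 2"
proof -
  have div: "(\<Sum>p\<leftarrow>ps. f p) / 2 = (\<Sum>p\<leftarrow>ps. f p / (2::complex))" for ps and f :: "_ \<Rightarrow> complex"
    by (induction ps) (auto simp: add_divide_distrib)
  show ?thesis
    unfolding tp_eval_tp_prod_swap[of B_kernel Q P] unfolding tp_eval_tp_prod sum_list_subtractf[symmetric]
    by (simp add: conn_kernel_def div diff_divide_distrib algebra_simps)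
qed

lemma conn_tp_fn:
  assumes P: "lie_tp P" and Q: "lie_tp Q"
  shows "conn (tp_fn P) (tp_fn Q) = tp_fn (tp_prod conn_kernel P Q)"
proof
  fix x
  have "pbracket (tp_fn P) (tp_fn Q) = tp_fn (tp_prod cross P Q)"
    using P Q by (intro pbracket_tp_fn) (simp_all add: lie_tp_def)
  then show "conn (tp_fn P) (tp_fn Q) x = tp_fn (tp_prod conn_kernel P Q) x"
    unfolding conn_def Bop_tp_fn[OF P Q] Bop_tp_fn[OF Q P] by (simp add: tp_fn_def tp_eval_tp_prod_conn)
qed

definition tp_neg :: "tpoly \<Rightarrow> tpoly" where
  "tp_neg P = map (\<lambda>q. (- fst q, snd q)) P"

lemma tp_eval_tp_neg: "tp_eval (tp_neg P) x = - tp_eval P x"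
  by (induction P) (auto simp: tp_neg_def)

lemma tp_fn_tp_neg: "tp_fn (tp_neg P) x = - tp_fn P x"
  by (simp add: tp_fn_def tp_eval_tp_neg)

definition tp_curv :: "tpoly \<Rightarrow> tpoly \<Rightarrow> tpoly \<Rightarrow> tpoly" where
  "tp_curv P Q R = tp_neg (tp_prod conn_kernel P (tp_prod conn_kernel Q R))
     @ tp_prod conn_kernel Q (tp_prod conn_kernel P R) @ tp_prod conn_kernel (tp_prod cross P Q) R"

lemma curv_tp_fn:
  assumes P: "lie_tp P" and Q: "lie_tp Q" and R: "lie_tp R"
  shows "curv (tp_fn P) (tp_fn Q) (tp_fn R) = tp_fn (tp_curv P Q R)"
proof
  fix x
  have "pbracket (tp_fn P) (tp_fn Q) = tp_fn (tp_prod cross P Q)"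
    using P Q by (intro pbracket_tp_fn) (simp_all add: lie_tp_def)
  then show "curv (tp_fn P) (tp_fn Q) (tp_fn R) x = tp_fn (tp_curv P Q R) x"
    unfolding curv_def tp_curv_def tp_fn_append tp_fn_tp_neg
    by (simp add: conn_tp_fn lie_tp_conn lie_tp_cross P Q R)
qed

lemma real_tp_tp_curv:
  assumes "lie_tp P" "lie_tp Q" "lie_tp R"
  shows "real_tp (tp_curv P Q R)"
proof -
  have "real_tp (tp_prod conn_kernel P (tp_prod conn_kernel Q R))"
    "real_tp (tp_prod conn_kernel Q (tp_prod conn_kernel P R))"
    "real_tp (tp_prod conn_kernel (tp_prod cross P Q) R)"
    using assms by (meson lie_tp_conn lie_tp_cross lie_tp_def)+
  then show ?thesis
    unfolding tp_curv_def by (intro real_tp_append) (simp_all add: real_tp_def tp_eval_tp_neg)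
qed

text \<open>\<open>curv_kernel m n p\<close> is the coefficient of \<open>e\<^sub>m\<^sub>+\<^sub>n\<^sub>+\<^sub>p\<close> in \<open>R(e\<^sub>m, e\<^sub>n) e\<^sub>p\<close>.\<close>

definition curv_kernel :: "mode \<Rightarrow> mode \<Rightarrow> mode \<Rightarrow> real" where
  "curv_kernel m n p = - conn_kernel n p * conn_kernel m (n + p) + conn_kernel m p * conn_kernel n (m + p)
     + cross m n * conn_kernel (m + n) p"

definition curv_summand :: "complex \<times> mode \<Rightarrow> complex \<times> mode \<Rightarrow> complex \<times> mode \<Rightarrow> complex \<times> mode \<Rightarrow> complex"
  where "curv_summand a b c d =
    (if snd a + snd b + snd c + snd d = 0
     then fst a * fst b * fst c * fst d
       * of_real (curv_kernel (snd a) (snd b) (snd c) * grad_kernel (snd a + snd b + snd c) (snd d))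
     else 0)"

definition curv_coeff :: "tpoly \<Rightarrow> tpoly \<Rightarrow> complex" where
  "curv_coeff P Q = (\<Sum>a\<leftarrow>P. \<Sum>c\<leftarrow>P. \<Sum>b\<leftarrow>Q. \<Sum>d\<leftarrow>Q. curv_summand a b c d)"

lemma tp_coeff_curv:
  "tp_coeff (tp_prod grad_kernel (tp_curv P Q P) Q) 0 = curv_coeff P Q"
proof -
  let ?g = "\<lambda>q. \<Sum>d\<leftarrow>Q. if snd q + snd d = 0 then fst q * fst d * of_real (grad_kernel (snd q) (snd d)) else 0"
  have c: "tp_coeff (tp_prod grad_kernel X Q) 0 = (\<Sum>q\<leftarrow>X. ?g q)" for X
    unfolding tp_coeff_tp_prod ..
  have neg: "tp_coeff (tp_prod \<phi> (tp_neg X) Q) m = - tp_coeff (tp_prod \<phi> X Q) m" for \<phi> X m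
  proof -
    have sum_neg: "- (\<Sum>x\<leftarrow>xs. f x) = (\<Sum>x\<leftarrow>xs. - (f x :: complex))" for xs f
      by (induction xs) auto
    have "(if b then - z else 0) = - (if b then z else (0::complex))" for b z
      by simp
    then show ?thesis
      by (simp add: tp_coeff_tp_prod tp_neg_def o_def sum_neg cong: if_cong)
  qed
  have "tp_coeff (tp_prod grad_kernel (tp_curv P Q P) Q) 0 =
     - (\<Sum>a\<leftarrow>P. \<Sum>b\<leftarrow>Q. \<Sum>c\<leftarrow>P. ?g (fst a * (fst b * fst c * of_real (conn_kernel (snd b) (snd c)))
         * of_real (conn_kernel (snd a) (snd b + snd c)), snd a + (snd b + snd c)))
     + (\<Sum>b\<leftarrow>Q. \<Sum>a\<leftarrow>P. \<Sum>c\<leftarrow>P. ?g (fst b * (fst a * fst c * of_real (conn_kernel (snd a) (snd c)))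
         * of_real (conn_kernel (snd b) (snd a + snd c)), snd b + (snd a + snd c)))
     + (\<Sum>a\<leftarrow>P. \<Sum>b\<leftarrow>Q. \<Sum>c\<leftarrow>P. ?g (fst a * fst b * of_real (cross (snd a) (snd b)) * fst c
         * of_real (conn_kernel (snd a + snd b) (snd c)), snd a + snd b + snd c))"
    unfolding tp_curv_def tp_prod_append_left tp_coeff_append neg c sum_list_tp_prod
    by (simp cong: if_cong)
  also have "\<dots> = curv_coeff P Q"
    unfolding curv_coeff_def curv_summand_def sum_list_swap[of _ Q P]
    by (simp add: sum_list_addf[symmetric] curv_kernel_def add_ac algebra_simps if_distrib cong: if_cong)
  finally show ?thesis .
qed

lemma ip_curv_tp_fn:
  assumes "lie_tp P" "lie_tp Q"
  shows "ip (curv (tp_fn P) (tp_fn Q) (tp_fn P)) (tp_fn Q) = S_T * Re (curv_coeff P Q)"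
  using assms unfolding curv_tp_fn[OF assms(1,2,1)]
  by (simp add: ip_tp_fn real_tp_tp_curv lie_tp_def tp_coeff_curv)

lemma conn_kernel_eq: "conn_kernel m n = cross m n * dot n (m + n) / norm2 (m + n)"
proof (cases "m + n = 0")
  case True
  then show ?thesis
    by (simp add: conn_kernel_def B_kernel_def cross_eq_0_if_add_eq_0 cross_commute[of n m])
next
  case False
  then have "norm2 (m + n) \<noteq> 0"
    by (simp add: norm2_eq_0_iff)
  then have "conn_kernel m n = cross m n * (norm2 (m + n) - norm2 m + norm2 n) / (2 * norm2 (m + n))"
    by (simp add: conn_kernel_def B_kernel_def cross_commute[of n m] add.commute[of n m] field_simps)
  also have "norm2 (m + n) - norm2 m + norm2 n = 2 * dot n (m + n)"
    by (simp add: norm2_def dot_def algebra_simps)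
  finally show ?thesis
    by simp
qed

text \<open>The only terms of \<open>\<langle>R(\<xi>, \<eta>)\<xi>, \<eta>\<rangle>\<close> that survive under the hypotheses of the theorem pair a frequency
  \<open>m\<close> of \<open>\<xi>\<close> with \<open>-m\<close> and a frequency \<open>n\<close> of \<open>\<eta>\<close> with \<open>-n\<close>; this is their kernel.\<close>

definition sec_kernel :: "mode \<Rightarrow> mode \<Rightarrow> real" where
  "sec_kernel m n = curv_kernel m n (- m) * norm2 n"

lemma sec_kernel_eq:
  assumes "n \<noteq> 0"
  shows "sec_kernel m n = - (cross m n ^ 4 / norm2 (m - n))"
proof -
  obtain m1 m2 n1 n2 where mn: "m = (m1, m2)" "n = (n1, n2)"
    by (cases m, cases n)
  let ?P = "cross m n" and ?D = "dot m n" and ?M = "norm2 m" and ?N = "norm2 n" and ?E = "norm2 (m - n)"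
  have N: "?N \<noteq> 0"
    using assms by (simp add: norm2_eq_0_iff)
  have E: "?E = ?M - 2 * ?D + ?N"
    by (simp add: mn norm2_def dot_def algebra_simps)
  have lagrange: "?M * ?N - ?D ^ 2 = ?P ^ 2"
    by (simp add: mn norm2_def dot_def cross_def power2_eq_square algebra_simps)
  have "sec_kernel m n = (- (?P * (?M - ?D) / ?E) * (?P * (?N - ?D) / ?N) + ?P * (?P * (- ?D) / ?N)) * ?N"
    unfolding sec_kernel_def curv_kernel_def conn_kernel_eq
    by (simp add: mn cross_def dot_def norm2_def algebra_simps)
  also have "\<dots> = - (?P ^ 4 / ?E)"
  proof (cases "?E = 0")
    case True
    then have "m = n"
      by (simp add: norm2_eq_0_iff)
    then show ?thesis
      by (simp add: cross_def)
  next
    case False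
    have "(- (?P * (?M - ?D) / ?E) * (?P * (?N - ?D) / ?N) + ?P * (?P * (- ?D) / ?N)) * ?N
        = - (?P ^ 2) * (((?M - ?D) * (?N - ?D) + ?D * ?E) / ?E)"
      using N False by (simp add: field_simps power2_eq_square)
    also have "(?M - ?D) * (?N - ?D) + ?D * ?E = ?P ^ 2"
      unfolding E lagrange[symmetric] by (simp add: algebra_simps power2_eq_square)
    finally show ?thesis
      by (simp add: power2_eq_square power4_eq_xxxx)
  qed
  finally show ?thesis .
qed

lemma sum_list_cong_set:
  "(\<And>x. x \<in> set xs \<Longrightarrow> f x = g x) \<Longrightarrow> (\<Sum>x\<leftarrow>xs. f x) = (\<Sum>x\<leftarrow>xs. (g x :: 'a::monoid_add))"
  by (metis map_cong)

lemma sum_list_mult_if_eq: "(\<Sum>d\<leftarrow>P. fst d * (if snd d = m then z else 0)) = tp_coeff P m * z"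
  by (induction P) (auto simp: algebra_simps)

lemma sum_list_curv_summand_antipodal:
  assumes "\<And>d. d \<in> set Q \<Longrightarrow> snd a + snd b + snd c + snd d = 0 \<longleftrightarrow> snd c = - snd a \<and> snd d = - snd b"
  shows "(\<Sum>d\<leftarrow>Q. curv_summand a b c d) =
    fst c * (if snd c = - snd a then fst a * (fst b * tp_coeff Q (- snd b) * of_real (sec_kernel (snd a) (snd b))) else 0)"
proof -
  have "grad_kernel (snd a + snd b + - snd a) (- snd b) = norm2 (snd b)"
    by (simp add: grad_kernel_def dot_def norm2_def)
  then have "(\<Sum>d\<leftarrow>Q. curv_summand a b c d) = (\<Sum>d\<leftarrow>Q. fst d * (if snd d = - snd b
      then (if snd c = - snd a then fst a * fst b * fst c * of_real (sec_kernel (snd a) (snd b)) else 0) else 0))"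
    using assms by (intro sum_list_cong_set) (auto simp: curv_summand_def sec_kernel_def)
  then show ?thesis
    unfolding sum_list_mult_if_eq by simp
qed

lemma curv_coeff_antipodal:
  assumes antipodal: "\<And>a b c d. a \<in> set P \<Longrightarrow> c \<in> set P \<Longrightarrow> b \<in> set Q \<Longrightarrow> d \<in> set Q \<Longrightarrow>
      snd a + snd b + snd c + snd d = 0 \<longleftrightarrow> snd c = - snd a \<and> snd d = - snd b"
  shows "curv_coeff P Q = (\<Sum>a\<leftarrow>P. fst a * tp_coeff P (- snd a)
      * (\<Sum>b\<leftarrow>Q. fst b * tp_coeff Q (- snd b) * of_real (sec_kernel (snd a) (snd b))))"
proof -
  let ?S = "\<lambda>a. \<Sum>b\<leftarrow>Q. fst b * tp_coeff Q (- snd b) * of_real (sec_kernel (snd a) (snd b))"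
  have inner: "(\<Sum>b\<leftarrow>Q. \<Sum>d\<leftarrow>Q. curv_summand a b c d) = fst c * (if snd c = - snd a then fst a * ?S a else 0)"
    if "a \<in> set P" "c \<in> set P" for a c
  proof -
    have "(\<Sum>b\<leftarrow>Q. \<Sum>d\<leftarrow>Q. curv_summand a b c d) = (\<Sum>b\<leftarrow>Q. fst c * (if snd c = - snd a
        then fst a * (fst b * tp_coeff Q (- snd b) * of_real (sec_kernel (snd a) (snd b))) else 0))"
      using antipodal that by (intro sum_list_cong_set sum_list_curv_summand_antipodal) blast
    then show ?thesis
      by (simp add: sum_list_const_mult)
  qed
  have "curv_coeff P Q = (\<Sum>a\<leftarrow>P. \<Sum>c\<leftarrow>P. fst c * (if snd c = - snd a then fst a * ?S a else 0))"
    unfolding curv_coeff_def by (intro sum_list_cong_set) (simp add: inner)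
  then show ?thesis
    unfolding sum_list_mult_if_eq by (simp add: algebra_simps)
qed

section \<open>The fields \<open>\<xi>\<^sub>k\<close>\<close>

definition xi_sign :: "nat \<Rightarrow> complex" where
  "xi_sign k2 = (-1) ^ (k2 + 1)"

lemma xi_sign_square [simp]: "xi_sign k * xi_sign k = 1" "xi_sign k * (xi_sign k * z) = z"
  by (simp_all add: xi_sign_def power_mult_distrib[symmetric] mult.assoc[symmetric])

definition xi_tp :: "complex \<Rightarrow> nat \<Rightarrow> nat \<Rightarrow> tpoly" where
  "xi_tp a k1 k2 = [(a, (int k1, int k2)), (cnj a, (- int k1, - int k2)),
     (xi_sign k2 * cnj a, (int k1, - int k2)), (xi_sign k2 * a, (- int k1, int k2))]"

lemma xi_eq_tp_fn: "xi a k1 k2 = tp_fn (xi_tp a k1 k2)"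
  by (rule ext) (simp add: xi_def tp_fn_def xi_tp_def xi_sign_def tp_eval_def wave_def algebra_simps)

lemma xi_eq_0: "k1 = 0 \<Longrightarrow> k2 = 0 \<Longrightarrow> xi a k1 k2 = (\<lambda>_. 0)"
  by (rule ext) (simp add: xi_def ee_def)

lemma lie_tp_xi_tp: "lie_tp (xi_tp a k1 k2)"
  unfolding lie_tp_def
proof
  let ?s = "xi_sign k2"
  show "real_tp (xi_tp a k1 k2)"
    unfolding real_tp_def
  proof
    fix x
    let ?z = "a * wave (int k1, int k2) x" and ?w = "a * wave (- int k1, int k2) x"
    have "wave (int k1, - int k2) x = cnj (wave (- int k1, int k2) x)"
      using wave_uminus[of "(- int k1, int k2)" x] by simp
    then have "tp_eval (xi_tp a k1 k2) x = (?z + cnj ?z) + ?s * (cnj ?w + ?w)"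
      using wave_uminus[of "(int k1, int k2)" x] by (simp add: xi_tp_def algebra_simps)
    moreover have "?s = of_real ((-1) ^ (k2 + 1))"
      by (simp add: xi_sign_def)
    ultimately show "Im (tp_eval (xi_tp a k1 k2) x) = 0"
      by (simp only: Im_complex_of_real complex_add_cnj) simp
  qed
  have "mode_sign (i, int k2) = - ?s" "mode_sign (i, - int k2) = - ?s" for i
    by (simp_all add: mode_sign_def xi_sign_def)
  then show "odd_tp (xi_tp a k1 k2)"
    unfolding odd_tp_def xi_tp_def tp_eval_Cons tp_eval_Nil fst_conv snd_conv wave_involution
    by (simp add: mode_refl_def algebra_simps)
qed

text \<open>For real \<open>P\<close> this is \<open>\<Sum>\<^sub>m |p\<^sub>m|\<^sup>2\<close>, summed along the list of \<open>P\<close>.\<close>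

definition tp_sqnorm :: "tpoly \<Rightarrow> complex" where
  "tp_sqnorm P = (\<Sum>q\<leftarrow>P. fst q * tp_coeff P (- snd q))"

lemma tp_sqnorm_pos:
  assumes P: "real_tp P" and nz: "tp_fn P \<noteq> (\<lambda>_. 0)"
  shows "Im (tp_sqnorm P) = 0" "Re (tp_sqnorm P) > 0"
proof -
  let ?r = "\<Sum>m\<in>mode_orbit P. (cmod (tp_coeff P m))\<^sup>2"
  have "tp_sqnorm P = (\<Sum>m\<in>mode_orbit P. tp_coeff P m * tp_coeff P (- m))"
    unfolding tp_sqnorm_def by (rule sum_list_eq_sum_tp_coeff[OF finite_mode_orbit mode_orbit_supset])
  also have "\<dots> = (\<Sum>m\<in>mode_orbit P. of_real ((cmod (tp_coeff P m))\<^sup>2))"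
    by (rule sum.cong[OF refl]) (simp only: tp_coeff_uminus_if_real[OF P] complex_norm_square)
  also have "\<dots> = of_real ?r"
    by simp
  finally have eq: "tp_sqnorm P = of_real ?r" .
  then show "Im (tp_sqnorm P) = 0"
    by simp
  have "?r \<noteq> 0"
  proof
    assume "?r = 0"
    then have "\<forall>m\<in>mode_orbit P. tp_coeff P m = 0"
      by (subst (asm) sum_nonneg_eq_0_iff) auto
    then have "tp_fn P x = 0" for x
      using tp_eval_eq_sum_tp_coeff[OF finite_mode_orbit mode_orbit_supset, of P x] by (simp add: tp_fn_def)
    then show False
      using nz by auto
  qed
  moreover have "?r \<ge> 0"
    by (simp add: sum_nonneg)
  ultimately show "Re (tp_sqnorm P) > 0"
    using eq by simp
qed

lemma tp_coeff_grad_self: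
  assumes "\<And>q. q \<in> set P \<Longrightarrow> norm2 (snd q) = c"
  shows "tp_coeff (tp_prod grad_kernel P P) 0 = of_real c * tp_sqnorm P"
proof -
  have "tp_coeff (tp_prod grad_kernel P P) 0
      = (\<Sum>a\<leftarrow>P. \<Sum>b\<leftarrow>P. fst b * (if snd b = - snd a then fst a * of_real c else 0))"
    unfolding tp_coeff_tp_prod
  proof (intro sum_list_cong_set)
    fix a b assume "a \<in> set P" "b \<in> set P"
    moreover have "grad_kernel m (- m) = norm2 m" for m
      by (simp add: grad_kernel_def dot_def norm2_def)
    ultimately show "(if snd a + snd b = 0 then fst a * fst b * of_real (grad_kernel (snd a) (snd b)) else 0)
       = fst b * (if snd b = - snd a then fst a * of_real c else 0)"
      using assms by (auto simp: add_eq_0_iff)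
  qed
  also have "\<dots> = of_real c * tp_sqnorm P"
    unfolding sum_list_mult_if_eq tp_sqnorm_def by (simp add: sum_list_const_mult[symmetric] algebra_simps)
  finally show ?thesis .
qed

lemma tp_coeff_grad_disjoint:
  assumes "\<And>a b. a \<in> set P \<Longrightarrow> b \<in> set Q \<Longrightarrow> snd a + snd b \<noteq> 0"
  shows "tp_coeff (tp_prod grad_kernel P Q) 0 = 0"
proof -
  have "tp_coeff (tp_prod grad_kernel P Q) 0 = (\<Sum>a\<leftarrow>P. \<Sum>b\<leftarrow>Q. 0)"
    unfolding tp_coeff_tp_prod by (intro sum_list_cong_set) (simp add: assms)
  then show ?thesis
    by simp
qed

lemma mem_xi_tp_modes:
  "q \<in> set (xi_tp a k1 k2) \<Longrightarrow> fst (snd q) \<in> {int k1, - int k1} \<and> snd (snd q) \<in> {int k2, - int k2}"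
  by (auto simp: xi_tp_def)

lemma norm2_xi_tp: "q \<in> set (xi_tp a k1 k2) \<Longrightarrow> norm2 (snd q) = real k1 ^ 2 + real k2 ^ 2"
  by (auto simp: xi_tp_def norm2_def power2_eq_square)

lemma xi_tp_antipodal:
  assumes "k1 \<noteq> l1" "k2 \<noteq> l2"
    and "a \<in> set (xi_tp p k1 k2)" "c \<in> set (xi_tp p k1 k2)" "b \<in> set (xi_tp r l1 l2)" "d \<in> set (xi_tp r l1 l2)"
  shows "snd a + snd b + snd c + snd d = 0 \<longleftrightarrow> snd c = - snd a \<and> snd d = - snd b"
proof -
  have signs: "x + y + z + w = 0 \<longleftrightarrow> z = - x \<and> w = - y"
    if "x \<in> {k, - k}" "z \<in> {k, - k}" "y \<in> {l, - l}" "w \<in> {l, - l}" "0 \<le> k" "0 \<le> l" "k \<noteq> l" for x y z w k l :: int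
    using that by auto
  show ?thesis
    using signs[of "fst (snd a)" "int k1" "fst (snd c)" "fst (snd b)" "int l1" "fst (snd d)"]
      signs[of "snd (snd a)" "int k2" "snd (snd c)" "snd (snd b)" "int l2" "snd (snd d)"]
      mem_xi_tp_modes[OF assms(3)] mem_xi_tp_modes[OF assms(4)] mem_xi_tp_modes[OF assms(5)]
      mem_xi_tp_modes[OF assms(6)] assms(1,2)
    by (simp add: prod_eq_iff) blast
qed

lemma xi_tp_disjoint:
  assumes "k1 \<noteq> l1" "a \<in> set (xi_tp p k1 k2)" "b \<in> set (xi_tp r l1 l2)"
  shows "snd a + snd b \<noteq> 0"
  using mem_xi_tp_modes[OF assms(2)] mem_xi_tp_modes[OF assms(3)] assms(1) by (auto simp: prod_eq_iff)

text \<open>For \<open>k\<^sub>2 \<noteq> 0\<close> all four summands of \<open>tp_sqnorm (xi_tp a k\<^sub>1 k\<^sub>2)\<close> agree (also when \<open>k\<^sub>1 = 0\<close>,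
  where the frequencies coincide in pairs); for \<open>k\<^sub>2 = 0\<close> they do not.\<close>

lemma xi_tp_uniform_weights:
  assumes "k2 \<noteq> 0" "e \<in> set (xi_tp a k1 k2)"
  shows "fst e * tp_coeff (xi_tp a k1 k2) (- snd e) = a * tp_coeff (xi_tp a k1 k2) (- (int k1, int k2))"
proof -
  have "e \<in> {(a, (int k1, int k2)), (cnj a, (- int k1, - int k2)),
      (xi_sign k2 * cnj a, (int k1, - int k2)), (xi_sign k2 * a, (- int k1, int k2))}"
    using assms(2) by (simp add: xi_tp_def)
  then show ?thesis
    using assms(1) by (cases "k1 = 0"; elim insertE emptyE; simp add: xi_tp_def algebra_simps)
qed

lemma tp_sqnorm_xi_tp:
  assumes "k2 \<noteq> 0"
  shows "tp_sqnorm (xi_tp a k1 k2) = 4 * (a * tp_coeff (xi_tp a k1 k2) (- (int k1, int k2)))"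
proof -
  have "tp_sqnorm (xi_tp a k1 k2) = (\<Sum>e\<leftarrow>xi_tp a k1 k2. a * tp_coeff (xi_tp a k1 k2) (- (int k1, int k2)))"
    unfolding tp_sqnorm_def by (rule sum_list_cong_set) (rule xi_tp_uniform_weights[OF assms])
  then show ?thesis
    by (simp add: xi_tp_def)
qed

definition sec_sum :: "nat \<Rightarrow> nat \<Rightarrow> nat \<Rightarrow> nat \<Rightarrow> real" where
  "sec_sum k1 k2 l1 l2 =
     (real k1 * real l2 - real k2 * real l1) ^ 4 / ((real k1 + real l1) ^ 2 + (real k2 + real l2) ^ 2)
   + (real k1 * real l2 - real k2 * real l1) ^ 4 / ((real k1 - real l1) ^ 2 + (real k2 - real l2) ^ 2)
   + (- real k1 * real l2 - real k2 * real l1) ^ 4 / ((real k1 + real l1) ^ 2 + (real k2 - real l2) ^ 2)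
   + (- real k1 * real l2 - real k2 * real l1) ^ 4 / ((real k1 - real l1) ^ 2 + (real k2 + real l2) ^ 2)"

lemma sec_kernel_Pair:
  assumes "(c, d) \<noteq> (0::mode)"
  shows "sec_kernel (a, b) (c, d) =
    - ((real_of_int a * real_of_int d - real_of_int b * real_of_int c) ^ 4
      / ((real_of_int a - real_of_int c) ^ 2 + (real_of_int b - real_of_int d) ^ 2))"
  using assms by (simp add: sec_kernel_eq cross_def norm2_def power2_eq_square)

lemma sum_sec_kernel_xi_tp:
  assumes "l1 \<noteq> 0 \<or> l2 \<noteq> 0"
  shows "n \<in> snd ` set (xi_tp b l1 l2) \<Longrightarrow>
      (\<Sum>e\<leftarrow>xi_tp a k1 k2. of_real (sec_kernel (snd e) n)) = - of_real (sec_sum k1 k2 l1 l2)"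
    "m \<in> snd ` set (xi_tp a k1 k2) \<Longrightarrow>
      (\<Sum>e\<leftarrow>xi_tp b l1 l2. of_real (sec_kernel m (snd e))) = - of_real (sec_sum k1 k2 l1 l2)"
  using assms unfolding xi_tp_def sec_sum_def
  by (auto simp: sec_kernel_Pair zero_prod_def power2_eq_square power4_eq_xxxx algebra_simps)

lemma sum_weighted_uniform:
  fixes f g :: "'a \<Rightarrow> complex"
  shows "(\<And>e. e \<in> set P \<Longrightarrow> f e = W) \<Longrightarrow> (\<And>b. b \<in> set Q \<Longrightarrow> (\<Sum>e\<leftarrow>P. T e b) = c) \<Longrightarrow>
      (\<Sum>e\<leftarrow>P. f e * (\<Sum>b\<leftarrow>Q. g b * T e b)) = W * c * (\<Sum>b\<leftarrow>Q. g b)"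
    "(\<And>e. e \<in> set Q \<Longrightarrow> g e = W) \<Longrightarrow> (\<And>a. a \<in> set P \<Longrightarrow> (\<Sum>e\<leftarrow>Q. T a e) = c) \<Longrightarrow>
      (\<Sum>a\<leftarrow>P. f a * (\<Sum>e\<leftarrow>Q. g e * T a e)) = W * c * (\<Sum>a\<leftarrow>P. f a)"
proof -
  assume f: "\<And>e. e \<in> set P \<Longrightarrow> f e = W" and T: "\<And>b. b \<in> set Q \<Longrightarrow> (\<Sum>e\<leftarrow>P. T e b) = c"
  have "(\<Sum>e\<leftarrow>P. f e * (\<Sum>b\<leftarrow>Q. g b * T e b)) = (\<Sum>e\<leftarrow>P. W * (\<Sum>b\<leftarrow>Q. g b * T e b))"
    by (rule sum_list_cong_set) (simp add: f)
  also have "\<dots> = W * (\<Sum>e\<leftarrow>P. \<Sum>b\<leftarrow>Q. g b * T e b)"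
    by (simp add: sum_list_const_mult)
  also have "\<dots> = W * (\<Sum>b\<leftarrow>Q. \<Sum>e\<leftarrow>P. g b * T e b)"
    by (simp only: sum_list_swap[where P=P and Q=Q])
  also have "\<dots> = W * (\<Sum>b\<leftarrow>Q. g b * (\<Sum>e\<leftarrow>P. T e b))"
    by (simp add: sum_list_const_mult)
  also have "\<dots> = W * (\<Sum>b\<leftarrow>Q. g b * c)"
    by (subst sum_list_cong_set[where g="\<lambda>b. g b * c"]) (simp_all add: T)
  finally show "(\<Sum>e\<leftarrow>P. f e * (\<Sum>b\<leftarrow>Q. g b * T e b)) = W * c * (\<Sum>b\<leftarrow>Q. g b)"
    by (simp add: sum_list_mult_const mult.assoc)
next
  assume g: "\<And>e. e \<in> set Q \<Longrightarrow> g e = W" and T: "\<And>a. a \<in> set P \<Longrightarrow> (\<Sum>e\<leftarrow>Q. T a e) = c"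
  have "(\<Sum>a\<leftarrow>P. f a * (\<Sum>e\<leftarrow>Q. g e * T a e)) = (\<Sum>a\<leftarrow>P. f a * (W * c))"
  proof (rule sum_list_cong_set)
    fix a assume "a \<in> set P"
    have "(\<Sum>e\<leftarrow>Q. g e * T a e) = (\<Sum>e\<leftarrow>Q. W * T a e)"
      by (rule sum_list_cong_set) (simp add: g)
    then show "f a * (\<Sum>e\<leftarrow>Q. g e * T a e) = f a * (W * c)"
      using T[OF \<open>a \<in> set P\<close>] by (simp add: sum_list_const_mult)
  qed
  then show "(\<Sum>a\<leftarrow>P. f a * (\<Sum>e\<leftarrow>Q. g e * T a e)) = W * c * (\<Sum>a\<leftarrow>P. f a)"
    by (simp add: sum_list_mult_const mult.commute)
qed

lemma curv_coeff_xi_tp: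
  assumes "k1 \<noteq> l1" "k2 \<noteq> l2" "l1 \<noteq> 0 \<or> l2 \<noteq> 0"
  shows "curv_coeff (xi_tp a k1 k2) (xi_tp b l1 l2)
    = - of_real (sec_sum k1 k2 l1 l2) * tp_sqnorm (xi_tp a k1 k2) * tp_sqnorm (xi_tp b l1 l2) / 4"
proof -
  let ?U = "xi_tp a k1 k2" and ?V = "xi_tp b l1 l2" and ?F = "of_real (sec_sum k1 k2 l1 l2) :: complex"
  let ?f = "\<lambda>e. fst e * tp_coeff ?U (- snd e)" and ?g = "\<lambda>e. fst e * tp_coeff ?V (- snd e)"
    and ?T = "\<lambda>e e'. of_real (sec_kernel (snd e) (snd e')) :: complex"
  have curv: "curv_coeff ?U ?V = (\<Sum>e\<leftarrow>?U. ?f e * (\<Sum>e'\<leftarrow>?V. ?g e' * ?T e e'))"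
    by (rule curv_coeff_antipodal) (rule xi_tp_antipodal[OF assms(1,2)])
  consider "k2 \<noteq> 0" | "l2 \<noteq> 0"
    using assms(2) by (cases "k2 = 0") auto
  then show ?thesis
  proof cases
    case 1
    define W where "W = a * tp_coeff ?U (- (int k1, int k2))"
    have W: "?f e = W" if "e \<in> set ?U" for e
      unfolding W_def by (rule xi_tp_uniform_weights[OF 1 that])
    have "curv_coeff ?U ?V = W * - ?F * tp_sqnorm ?V"
      unfolding curv tp_sqnorm_def
      by (rule sum_weighted_uniform(1), erule W, rule sum_sec_kernel_xi_tp(1)[OF assms(3) imageI])
    then show ?thesis
      using tp_sqnorm_xi_tp[OF 1] by (simp add: W_def)
  next
    case 2
    define W where "W = b * tp_coeff ?V (- (int l1, int l2))"
    have W: "?g e = W" if "e \<in> set ?V" for e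
      unfolding W_def by (rule xi_tp_uniform_weights[OF 2 that])
    have "curv_coeff ?U ?V = W * - ?F * tp_sqnorm ?U"
      unfolding curv tp_sqnorm_def
      by (rule sum_weighted_uniform(2), erule W, rule sum_sec_kernel_xi_tp(2)[OF assms(3) imageI])
    then show ?thesis
      using tp_sqnorm_xi_tp[OF 2] by (simp add: W_def)
  qed
qed

lemma ip_xi_self:
  "ip (xi a k1 k2) (xi a k1 k2) = S_T * ((real k1 ^ 2 + real k2 ^ 2) * Re (tp_sqnorm (xi_tp a k1 k2)))"
proof -
  have U: "real_tp (xi_tp a k1 k2)"
    using lie_tp_xi_tp by (simp add: lie_tp_def)
  show ?thesis
    unfolding xi_eq_tp_fn ip_tp_fn[OF U U]
    by (subst tp_coeff_grad_self[where c="real k1 ^ 2 + real k2 ^ 2"]) (simp_all add: norm2_xi_tp)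
qed

lemma ip_xi_orthogonal: "k1 \<noteq> l1 \<Longrightarrow> ip (xi a k1 k2) (xi b l1 l2) = 0"
  unfolding xi_eq_tp_fn using lie_tp_xi_tp
  by (simp add: lie_tp_def ip_tp_fn tp_coeff_grad_disjoint[OF xi_tp_disjoint])

lemma sec_curv_xi:
  assumes kl: "k1 \<noteq> l1" "k2 \<noteq> l2" and nz: "xi a k1 k2 \<noteq> (\<lambda>_. 0)" "xi b l1 l2 \<noteq> (\<lambda>_. 0)"
  shows "sec_curv (xi a k1 k2) (xi b l1 l2) =
    - 1 / (4 * S_T * (real k1 ^ 2 + real k2 ^ 2) * (real l1 ^ 2 + real l2 ^ 2)) * sec_sum k1 k2 l1 l2"
proof -
  let ?U = "xi_tp a k1 k2" and ?V = "xi_tp b l1 l2"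
  define K L rA rB where "K = real k1 ^ 2 + real k2 ^ 2" and "L = real l1 ^ 2 + real l2 ^ 2"
    and "rA = Re (tp_sqnorm ?U)" and "rB = Re (tp_sqnorm ?V)"
  have A: "Im (tp_sqnorm ?U) = 0" "rA > 0" and B: "Im (tp_sqnorm ?V) = 0" "rB > 0"
    using tp_sqnorm_pos lie_tp_xi_tp nz unfolding rA_def rB_def xi_eq_tp_fn lie_tp_def by blast+
  have l: "l1 \<noteq> 0 \<or> l2 \<noteq> 0"
    using nz(2) xi_eq_0 by blast
  have "tp_sqnorm ?U = of_real rA" "tp_sqnorm ?V = of_real rB"
    using A(1) B(1) by (simp_all add: rA_def rB_def complex_eq_iff)
  then have "curv_coeff ?U ?V = of_real (- sec_sum k1 k2 l1 l2 * rA * rB / 4)"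
    unfolding curv_coeff_xi_tp[OF kl l] by simp
  then have "ip (curv (xi a k1 k2) (xi b l1 l2) (xi a k1 k2)) (xi b l1 l2)
      = - S_T * sec_sum k1 k2 l1 l2 * rA * rB / 4"
    unfolding xi_eq_tp_fn ip_curv_tp_fn[OF lie_tp_xi_tp lie_tp_xi_tp] by simp
  moreover have "ip (xi a k1 k2) (xi a k1 k2) = S_T * (K * rA)" "ip (xi b l1 l2) (xi b l1 l2) = S_T * (L * rB)"
    by (simp_all add: ip_xi_self K_def L_def rA_def rB_def)
  moreover have "K > 0" "L > 0"
    using nz xi_eq_0 by (auto simp: K_def L_def sum_power2_gt_zero_iff)
  moreover have "S_T > 0"
    by (simp add: S_T_def)
  ultimately have "sec_curv (xi a k1 k2) (xi b l1 l2) = - 1 / (4 * S_T * K * L) * sec_sum k1 k2 l1 l2"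
    using A(2) B(2) unfolding sec_curv_def ip_xi_orthogonal[OF kl(1)] by (simp add: field_simps)
  then show ?thesis
    by (simp add: K_def L_def)
qed

lemma cross_square_le: "((a1::real) * b2 - a2 * b1) ^ 2 \<le> (a1 ^ 2 + a2 ^ 2) * (b1 ^ 2 + b2 ^ 2)"
proof -
  have "(a1 ^ 2 + a2 ^ 2) * (b1 ^ 2 + b2 ^ 2) - (a1 * b2 - a2 * b1) ^ 2 = (a1 * b1 + a2 * b2) ^ 2"
    by (simp add: power2_eq_square algebra_simps)
  then show ?thesis
    by (metis diff_ge_0_iff_ge zero_le_power2)
qed

lemma power4_divide_le:
  assumes "(X::real) ^ 2 \<le> M * D" and "0 \<le> D"
  shows "X ^ 4 / D \<le> X ^ 2 * M"
proof (cases "D = 0")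
  case True
  then show ?thesis
    using assms(1) by simp
next
  case False
  have "X ^ 4 = X ^ 2 * X ^ 2"
    by (simp add: power2_eq_square power4_eq_xxxx)
  also have "\<dots> \<le> X ^ 2 * (M * D)"
    by (rule mult_left_mono[OF assms(1)]) simp
  finally show ?thesis
    using False assms(2) by (simp add: divide_le_eq mult.assoc)
qed

text \<open>\<open>k \<times> l = k \<times> (k + l) = (k + l) \<times> l\<close>, so both Lagrange bounds apply to the quotient.\<close>

lemma cross_quartic_le:
  fixes x1 x2 y1 y2 :: real
  shows "(x1 * y2 - x2 * y1) ^ 4 / ((x1 + y1) ^ 2 + (x2 + y2) ^ 2)
    \<le> (x1 * y2 - x2 * y1) ^ 2 * min (x1 ^ 2 + x2 ^ 2) (y1 ^ 2 + y2 ^ 2)"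
proof (rule power4_divide_le)
  have "(x1 * y2 - x2 * y1) ^ 2 \<le> (x1 ^ 2 + x2 ^ 2) * ((x1 + y1) ^ 2 + (x2 + y2) ^ 2)"
    "(x1 * y2 - x2 * y1) ^ 2 \<le> (y1 ^ 2 + y2 ^ 2) * ((x1 + y1) ^ 2 + (x2 + y2) ^ 2)"
    using cross_square_le[of x1 "x2 + y2" x2 "x1 + y1"] cross_square_le[of "x1 + y1" y2 "x2 + y2" y1]
    by (simp_all add: algebra_simps)
  then show "(x1 * y2 - x2 * y1) ^ 2 \<le> min (x1 ^ 2 + x2 ^ 2) (y1 ^ 2 + y2 ^ 2) * ((x1 + y1) ^ 2 + (x2 + y2) ^ 2)"
    by (simp add: min_def)
qed simp

lemma sec_sum_le:
  "sec_sum k1 k2 l1 l2 \<le> 4 * (real k1 ^ 2 + real k2 ^ 2) * (real l1 ^ 2 + real l2 ^ 2)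
     * min (real k1 ^ 2 + real k2 ^ 2) (real l1 ^ 2 + real l2 ^ 2)"
proof -
  define x1 x2 y1 y2 where "x1 = real k1" and "x2 = real k2" and "y1 = real l1" and "y2 = real l2"
  define P Q K L where "P = x1 * y2 - x2 * y1" and "Q = - x1 * y2 - x2 * y1"
    and "K = x1 ^ 2 + x2 ^ 2" and "L = y1 ^ 2 + y2 ^ 2"
  have "sec_sum k1 k2 l1 l2 \<le> P ^ 2 * min K L + P ^ 2 * min K L + Q ^ 2 * min K L + Q ^ 2 * min K L"
    using cross_quartic_le[of x1 y2 x2 y1] cross_quartic_le[of x1 "- y2" x2 "- y1"]
      cross_quartic_le[of x1 "- y2" x2 y1] cross_quartic_le[of x1 y2 x2 "- y1"]
    unfolding sec_sum_def x1_def[symmetric] x2_def[symmetric] y1_def[symmetric] y2_def[symmetric]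
    by (simp add: P_def Q_def K_def L_def power2_eq_square power4_eq_xxxx algebra_simps)
  also have "\<dots> = 2 * (P ^ 2 + Q ^ 2) * min K L"
    by (simp add: algebra_simps)
  also have "\<dots> \<le> 2 * (2 * (K * L)) * min K L"
  proof -
    have "2 * (K * L) - (P ^ 2 + Q ^ 2) = 2 * (x1 * y1) ^ 2 + 2 * (x2 * y2) ^ 2"
      by (simp add: P_def Q_def K_def L_def power2_eq_square algebra_simps)
    then have "P ^ 2 + Q ^ 2 \<le> 2 * (K * L)"
      by (smt (verit) zero_le_power2)
    then show ?thesis
      by (intro mult_right_mono) (simp_all add: K_def L_def)
  qed
  also have "\<dots> = 4 * K * L * min K L"
    by (simp add: mult_ac)
  finally show ?thesis
    unfolding K_def L_def x1_def x2_def y1_def y2_def .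
qed

lemma sec_sum_pos:
  assumes "k1 \<noteq> l1" "k2 \<noteq> l2" "k1 \<noteq> 0 \<or> k2 \<noteq> 0" "l1 \<noteq> 0 \<or> l2 \<noteq> 0"
  shows "0 < sec_sum k1 k2 l1 l2"
proof -
  define P Q where "P = real k1 * real l2 - real k2 * real l1" and "Q = - real k1 * real l2 - real k2 * real l1"
  have D: "0 < (real k1 + real l1) ^ 2 + (real k2 + real l2) ^ 2"
    "0 < (real k1 + real l1) ^ 2 + (real k2 - real l2) ^ 2"
    using assms(1) by (simp_all add: add_pos_nonneg)
  have "P \<noteq> 0 \<or> Q \<noteq> 0"
  proof (rule ccontr)
    assume "\<not> (P \<noteq> 0 \<or> Q \<noteq> 0)"
    then have "real k1 * real l2 = 0" "real k2 * real l1 = 0"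
      unfolding P_def Q_def by linarith+
    then show False
      using assms by auto
  qed
  then have "0 < P ^ 4 / ((real k1 + real l1) ^ 2 + (real k2 + real l2) ^ 2)
      + Q ^ 4 / ((real k1 + real l1) ^ 2 + (real k2 - real l2) ^ 2)"
    using D by (auto intro: add_pos_nonneg add_nonneg_pos)
  moreover have "0 \<le> P ^ 4 / ((real k1 - real l1) ^ 2 + (real k2 - real l2) ^ 2)"
    "0 \<le> Q ^ 4 / ((real k1 - real l1) ^ 2 + (real k2 + real l2) ^ 2)"
    by simp_all
  ultimately show ?thesis
    unfolding sec_sum_def P_def[symmetric] Q_def[symmetric] by linarith
qed

lemma sec_sum_ratio_bounds:
  fixes k1 k2 l1 l2 :: nat and c :: real
  defines "K \<equiv> real k1 ^ 2 + real k2 ^ 2" and "L \<equiv> real l1 ^ 2 + real l2 ^ 2"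
  assumes "k1 \<noteq> l1" "k2 \<noteq> l2" "k1 \<noteq> 0 \<or> k2 \<noteq> 0" "l1 \<noteq> 0 \<or> l2 \<noteq> 0" and "c > 0"
  shows "- min K L / c \<le> - 1 / (4 * c * K * L) * sec_sum k1 k2 l1 l2"
    and "- 1 / (4 * c * K * L) * sec_sum k1 k2 l1 l2 < 0"
proof -
  have pos: "K > 0" "L > 0"
    using assms(5,6) by (auto simp: K_def L_def sum_power2_gt_zero_iff)
  then have KL: "4 * K * L > 0"
    by simp
  have "sec_sum k1 k2 l1 l2 \<le> min K L * (4 * K * L)"
    using sec_sum_le[of k1 k2 l1 l2] unfolding K_def L_def by (simp add: mult_ac)
  then have "sec_sum k1 k2 l1 l2 / (4 * K * L) \<le> min K L"
    by (simp only: pos_divide_le_eq[OF KL])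
  then have "- min K L / c \<le> - (sec_sum k1 k2 l1 l2 / (4 * K * L)) / c"
    using divide_right_mono[OF _ less_imp_le[OF \<open>c > 0\<close>]] by (simp only: minus_divide_left neg_le_iff_le)
  then show "- min K L / c \<le> - 1 / (4 * c * K * L) * sec_sum k1 k2 l1 l2"
    by (simp add: field_simps)
  have "0 < sec_sum k1 k2 l1 l2 / (4 * c * K * L)"
    using sec_sum_pos[OF assms(3-6)] pos \<open>c > 0\<close> by (intro divide_pos_pos) simp_all
  then show "- 1 / (4 * c * K * L) * sec_sum k1 k2 l1 l2 < 0"
    by simp
qed

theorem corollary4:
  fixes k1 k2 l1 l2 :: nat and a b :: complex
  assumes "k1 \<noteq> l1" and "k2 \<noteq> l2"
    and "xi a k1 k2 \<noteq> (\<lambda>_. 0)" and "xi b l1 l2 \<noteq> (\<lambda>_. 0)"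
  shows "sec_curv (xi a k1 k2) (xi b l1 l2) =
      - 1 / (4 * S_T * (real k1 ^ 2 + real k2 ^ 2) * (real l1 ^ 2 + real l2 ^ 2)) *
        ((real k1 * real l2 - real k2 * real l1) ^ 4
            / ((real k1 + real l1) ^ 2 + (real k2 + real l2) ^ 2)
         + (real k1 * real l2 - real k2 * real l1) ^ 4
            / ((real k1 - real l1) ^ 2 + (real k2 - real l2) ^ 2)
         + (- real k1 * real l2 - real k2 * real l1) ^ 4
            / ((real k1 + real l1) ^ 2 + (real k2 - real l2) ^ 2)
         + (- real k1 * real l2 - real k2 * real l1) ^ 4
            / ((real k1 - real l1) ^ 2 + (real k2 + real l2) ^ 2))
    \<and> - min (real k1 ^ 2 + real k2 ^ 2) (real l1 ^ 2 + real l2 ^ 2) / S_T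
        \<le> sec_curv (xi a k1 k2) (xi b l1 l2)
    \<and> sec_curv (xi a k1 k2) (xi b l1 l2) < 0"
proof -
  have "k1 \<noteq> 0 \<or> k2 \<noteq> 0" "l1 \<noteq> 0 \<or> l2 \<noteq> 0"
    using assms(3,4) xi_eq_0 by blast+
  moreover have "S_T > 0"
    by (simp add: S_T_def)
  ultimately show ?thesis
    unfolding sec_curv_xi[OF assms]
    by (intro conjI sec_sum_ratio_bounds[OF assms(1,2)]) (simp_all add: sec_sum_def)
qed

end
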